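(* Let $C$ be a conformal algebra, $t(b_1,\dots,b_n)$ a non-associative monomial obtained from $b_1\cdots b_n$ by a bracketing, $\sigma\in S_n$, $x_1,\dots,x_{n-1}\in\Bbbk[t]$, $y\in\Bbbk[t,t^{-1}]$ and $a_1,\dots,a_n\in C$. Define, for $i=1,\dots,n$, $\zeta_i=x_{i\sigma\,(2)}$ if $i\sigma\neq n$ and $\zeta_i=y\,S(x_{1(1)}\cdots x_{n-1(1)})$ if $i\sigma=n$ (Sweedler summation over the components of $\Delta(x_1),\dots,\Delta(x_{n-1})$ understood). Then $$P^{x_1\otimes\cdots\otimes x_{n-1}}_y\big((\sigma\otimes_H\mathrm{id}_C)\,t^*(a_{1\sigma},\dots,a_{n\sigma})\big)=t\big(a_{1\sigma}(\zeta_1),\dots,a_{n\sigma}(\zeta_n)\big).$$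
   Context: $\Bbbk$ is a field of characteristic $0$, $H=\Bbbk[D]$ with Hopf structure $\Delta(D)=D\otimes1+1\otimes D$, $\varepsilon(D)=0$, $S(D)=-D$; iterated coproduct $\Delta^{(1)}=\mathrm{id}$, $\Delta^{(k+1)}=(\mathrm{id}\otimes\Delta^{(k)})\Delta$; $H$ acts on $H^{\otimes n}$ from the right by $(f_1\otimes\cdots\otimes f_n)h=f_1h_{(1)}\otimes\cdots\otimes f_nh_{(n)}$ and $H^{\otimes n}\otimes_H M$ is taken w.r.t. this action. A conformal algebra is a unital left $H$-module $C$ with bilinear operations $a_{(n)}b$ ($n\ge0$) such that $a_{(n)}b=0$ for $n\gg0$, $(Da)_{(n)}b=-na_{(n-1)}b$, $a_{(n)}(Db)=D(a_{(n)}b)+na_{(n-1)}b$. Pseudoproduct $a*b=\sum_{s\ge0}\frac{(-D)^s}{s!}\otimes1\otimes_H(a_{(s)}b)$; expanded pseudoproduct: if $a*b=\sum_i f_i\otimes g_i\otimes_H c_i$ then $(F\otimes_H a)*(G\otimes_H b)=\sum_iF\Delta^{(n)}(f_i)\otimes G\Delta^{(m)}(g_i)\otimes_H c_i$. For a bracketing $t$, $t^*(b_1,\dots,b_n)\in H^{\otimes n}\otimes_HC$ is obtained by replacing each product by the expanded pseudoproduct, with $b_i$ regarded as $1\otimes_H b_i$. $i\sigma$ denotes the image of $i$ under $\sigma$, and $\sigma\otimes_H\mathrm{id}_C$ is induced by the permutation of tensor factors of $H^{\otimes n}$ sending the $k$-th factor to position $k\sigma$. Coefficient algebra: $\operatorname{Coeff}C=\Bbbk[t,t^{-1}]\otimes_HC$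 ($\Bbbk[t,t^{-1}]$ a right $H$-module via $t^nD=-nt^{n-1}$), $a(x):=x\otimes_Ha$, with product $a(t^n)b(t^m)=\sum_{s\ge0}\binom ns(a_{(s)}b)(t^{n+m-s})$. On $\Bbbk[t]$: coproduct $\Delta(t)=t\otimes1+1\otimes t$ (notation $x_{(1)}\otimes x_{(2)}$), antipode $S(t)=-t$, pairing with $H$: $\langle t^k,D^m\rangle=k!\,\delta_{k,m}$. Let $\theta:H^{\otimes n}\otimes_HC\to H^{\otimes(n-1)}\otimes C$ be the isomorphism $(h_1\otimes\cdots\otimes h_{n-1}\otimes1)\otimes_Hc\mapsto h_1\otimes\cdots\otimes h_{n-1}\otimes c$. For $x_i\in\Bbbk[t]$, $P^{x_1\otimes\cdots\otimes x_{n-1}}=(\langle S(x_1),\cdot\rangle\otimes\cdots\otimes\langle S(x_{n-1}),\cdot\rangle\otimes\mathrm{id}_C)\theta:H^{\otimes n}\otimes_HC\to C$, and $P^{\bar x}_y(A):=y\otimes_HP^{\bar x}(A)\in\operatorname{Coeff}C$. *)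

theory Defs
  imports Main "HOL-Library.Function_Algebras" "HOL-Library.FuncSet"
    "HOL-Computational_Algebra.Polynomial" "HOL-Combinatorics.Permutations"
begin

text \<open>A conformal algebra over a field 'k (char 0): a 'k-vector space C (type 'c, scalar
  multiplication sc), the action of D (Dop, linear), bilinear n-products (pr n a b = a_(n) b),
  locality and the two sesquilinearity axioms.  Natural-number subtraction n - 1 at n = 0 is
  harmless since the term is multiplied by n = 0.\<close>

definition conformal_algebra ::
  "('k::field_char_0 \<Rightarrow> 'c::ab_group_add \<Rightarrow> 'c) \<Rightarrow> ('c \<Rightarrow> 'c) \<Rightarrow> (nat \<Rightarrow> 'c \<Rightarrow> 'c \<Rightarrow> 'c) \<Rightarrow> bool" where
  "conformal_algebra sc Dop pr \<longleftrightarrow>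
     vector_space sc \<and>
     Vector_Spaces.linear sc sc Dop \<and>
     (\<forall>n a. Vector_Spaces.linear sc sc (pr n a)) \<and>
     (\<forall>n b. Vector_Spaces.linear sc sc (\<lambda>a. pr n a b)) \<and>
     (\<forall>a b. \<exists>N. \<forall>n\<ge>N. pr n a b = 0) \<and>
     (\<forall>n a b. pr n (Dop a) b = sc (- of_nat n) (pr (n - 1) a b)) \<and>
     (\<forall>n a b. pr n a (Dop b) = Dop (pr n a b) + sc (of_nat n) (pr (n - 1) a b))"

datatype bracketing = Leaf | Node bracketing bracketing

fun leaves :: "bracketing \<Rightarrow> nat" where
  "leaves Leaf = 1"
| "leaves (Node l r) = leaves l + leaves r"

text \<open>An element of H^{\<otimes>n} \<otimes> C (H = k[D]) is represented by its coefficient function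
  A :: nat list \<Rightarrow> 'c (finitely supported on lists of length n):
  the element is  \<Sum>_\<alpha> D^{\<alpha>_0} \<otimes> ... \<otimes> D^{\<alpha>_{n-1}} \<otimes> A \<alpha>.
  Such a representative also denotes its class in H^{\<otimes>n} \<otimes>_H C.  Indices are 0-based.\<close>

definition tens1 :: "'c::zero \<Rightarrow> nat list \<Rightarrow> 'c" where
  "tens1 b = (\<lambda>\<alpha>. if \<alpha> = [0] then b else 0)"

text \<open>Expanded pseudoproduct of an element of H^{\<otimes>n} \<otimes>_H C with one of H^{\<otimes>m} \<otimes>_H C
  (extended bilinearly): from a*b = \<Sum>_s (-D)^s/s! \<otimes> 1 \<otimes>_H a_(s) b we get
  (D^\<alpha> \<otimes>_H a)*(D^\<beta> \<otimes>_H b) = \<Sum>_s D^\<alpha> \<Delta>^{(n)}((-D)^s/s!) \<otimes> D^\<beta> \<otimes>_H a_(s) b, and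
  \<Delta>^{(n)}((-D)^s)/s! = \<Sum>_{|j|=s} (-1)^s / (\<Prod> j_i!) D^j (multinomial theorem).
  The coefficient of D^\<gamma> is collected by summing over \<alpha> \<le> take n \<gamma>, with j = take n \<gamma> - \<alpha>.\<close>
definition pseudoprod ::
  "('k::field_char_0 \<Rightarrow> 'c::ab_group_add \<Rightarrow> 'c) \<Rightarrow> (nat \<Rightarrow> 'c \<Rightarrow> 'c \<Rightarrow> 'c) \<Rightarrow> nat \<Rightarrow> nat \<Rightarrow>
     (nat list \<Rightarrow> 'c) \<Rightarrow> (nat list \<Rightarrow> 'c) \<Rightarrow> nat list \<Rightarrow> 'c" where
  "pseudoprod sc pr n m A B = (\<lambda>\<gamma>.
     if length \<gamma> = n + m then
       (\<Sum>\<alpha>\<in>{\<alpha>. length \<alpha> = n \<and> list_all2 (\<le>) \<alpha> (take n \<gamma>)}.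
          let j = map2 (-) (take n \<gamma>) \<alpha>; s = sum_list j in
          sc ((-1) ^ s / prod_list (map fact j)) (pr s (A \<alpha>) (B (drop n \<gamma>))))
     else 0)"

fun tstar ::
  "('k::field_char_0 \<Rightarrow> 'c::ab_group_add \<Rightarrow> 'c) \<Rightarrow> (nat \<Rightarrow> 'c \<Rightarrow> 'c \<Rightarrow> 'c) \<Rightarrow> bracketing \<Rightarrow>
     'c list \<Rightarrow> nat list \<Rightarrow> 'c" where
  "tstar sc pr Leaf bs = tens1 (hd bs)"
| "tstar sc pr (Node l r) bs =
     pseudoprod sc pr (leaves l) (leaves r)
       (tstar sc pr l (take (leaves l) bs)) (tstar sc pr r (drop (leaves l) bs))"

text \<open>\<sigma> \<otimes>_H id_C: the k-th tensor factor is moved to position \<sigma> k, i.e.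
  D^{\<alpha>_0} \<otimes> ... \<otimes> D^{\<alpha>_{n-1}} goes to D^\<beta> with \<beta>_{\<sigma> k} = \<alpha>_k.\<close>
definition perm_tens :: "(nat \<Rightarrow> nat) \<Rightarrow> (nat list \<Rightarrow> 'c) \<Rightarrow> nat list \<Rightarrow> 'c" where
  "perm_tens \<sigma> A = (\<lambda>\<beta>. A (map (\<lambda>k. \<beta> ! \<sigma> k) [0..<length \<beta>]))"

text \<open>The isomorphism \<theta> : H^{\<otimes>n} \<otimes>_H C \<rightarrow> H^{\<otimes>(n-1)} \<otimes> C, computed on representatives.
  Writing D_{n} = \<Delta>^{(n)}(D) - u with u = D_1 + ... + D_{n-1} (1-based), we get
  (D^{\<alpha>'} \<otimes> D^k) \<otimes>_H c = \<Sum>_j (k choose j) D^{\<alpha>'} (-u)^{k-j} \<otimes>_H D^j c, so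
  \<theta>(D^{\<alpha>'} \<otimes> D^k \<otimes>_H c) = \<Sum>_{l} (k choose |l|) (-1)^{|l|} |l|!/\<Prod> l_i! D^{\<alpha>'+l} \<otimes> D^{k-|l|} c.\<close>
definition theta ::
  "('k::field_char_0 \<Rightarrow> 'c::ab_group_add \<Rightarrow> 'c) \<Rightarrow> ('c \<Rightarrow> 'c) \<Rightarrow> nat \<Rightarrow> (nat list \<Rightarrow> 'c) \<Rightarrow> nat list \<Rightarrow> 'c" where
  "theta sc Dop n A = (\<lambda>\<beta>.
     if length \<beta> = n - 1 then
       (\<Sum>\<alpha>\<in>{\<alpha>. length \<alpha> = n \<and> A \<alpha> \<noteq> 0 \<and> list_all2 (\<le>) (butlast \<alpha>) \<beta> \<and>
                 sum_list (map2 (-) \<beta> (butlast \<alpha>)) \<le> last \<alpha>}.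
          let l = map2 (-) \<beta> (butlast \<alpha>); r = sum_list l; k = last \<alpha> in
          sc (of_nat (k choose r) * (-1) ^ r * fact r / prod_list (map fact l))
             ((Dop ^^ (k - r)) (A \<alpha>)))
     else 0)"

definition antipode_t :: "'k::comm_ring_1 poly \<Rightarrow> 'k poly" where
  "antipode_t x = pcompose x [:0, -1:]"

text \<open>\<langle>x, D^m\<rangle> for x \<in> k[t], where \<langle>t^k, D^m\<rangle> = k! \<delta>_{k,m}.\<close>
definition pairing :: "'k::field_char_0 poly \<Rightarrow> nat \<Rightarrow> 'k" where
  "pairing x m = fact m * coeff x m"

text \<open>P^{x_1 \<otimes> ... \<otimes> x_{n-1}} : H^{\<otimes>n} \<otimes>_H C \<rightarrow> C (x_i indexed 0..n-2 here).\<close>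
definition Pmap ::
  "('k::field_char_0 \<Rightarrow> 'c::ab_group_add \<Rightarrow> 'c) \<Rightarrow> ('c \<Rightarrow> 'c) \<Rightarrow> nat \<Rightarrow> (nat \<Rightarrow> 'k poly) \<Rightarrow>
     (nat list \<Rightarrow> 'c) \<Rightarrow> 'c" where
  "Pmap sc Dop n xs A =
     (\<Sum>\<beta>\<in>{\<beta>. length \<beta> = n - 1 \<and> theta sc Dop n A \<beta> \<noteq> 0}.
        sc (\<Prod>i<n - 1. pairing (antipode_t (xs i)) (\<beta> ! i)) (theta sc Dop n A \<beta>))"

text \<open>Laurent polynomials y \<in> k[t,t^{-1}] are finitely supported functions int \<Rightarrow> 'k
  (y = \<Sum> y p t^p).  An element of k[t,t^{-1}] \<otimes> C is represented by R :: int \<Rightarrow> 'c,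
  finitely supported, meaning \<Sum>_p t^p \<otimes> R p; it denotes its class in Coeff C.\<close>

text \<open>Generators of the kernel of k[t,t^{-1}] \<otimes> C \<rightarrow> Coeff C:  t^m D \<otimes> c - t^m \<otimes> D c,
  where t^m D = -m t^{m-1}.\<close>
definition coeff_rel :: "('k::field_char_0 \<Rightarrow> 'c::ab_group_add \<Rightarrow> 'c) \<Rightarrow> ('c \<Rightarrow> 'c) \<Rightarrow> (int \<Rightarrow> 'c) set" where
  "coeff_rel sc Dop = {(\<lambda>p. (if p = m - 1 then sc (- of_int m) c else 0) - (if p = m then Dop c else 0))
                        | m c. True}"

definition coeff_eq ::
  "('k::field_char_0 \<Rightarrow> 'c::ab_group_add \<Rightarrow> 'c) \<Rightarrow> ('c \<Rightarrow> 'c) \<Rightarrow> (int \<Rightarrow> 'c) \<Rightarrow> (int \<Rightarrow> 'c) \<Rightarrow> bool" where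
  "coeff_eq sc Dop R1 R2 \<longleftrightarrow>
     R1 - R2 \<in> module.span (\<lambda>r f p. sc r (f p)) (coeff_rel sc Dop)"

definition coeff_elem :: "('k \<Rightarrow> 'c \<Rightarrow> 'c) \<Rightarrow> 'c \<Rightarrow> (int \<Rightarrow> 'k) \<Rightarrow> int \<Rightarrow> 'c" where
  "coeff_elem sc a \<zeta> = (\<lambda>p. sc (\<zeta> p) a)"

text \<open>Product of Coeff C on representatives, extended bilinearly from
  a(t^n) b(t^m) = \<Sum>_{s\<ge>0} (n choose s) (a_(s) b)(t^{n+m-s}).\<close>
definition coeff_mult ::
  "('k::field_char_0 \<Rightarrow> 'c::ab_group_add \<Rightarrow> 'c) \<Rightarrow> (nat \<Rightarrow> 'c \<Rightarrow> 'c \<Rightarrow> 'c) \<Rightarrow>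
     (int \<Rightarrow> 'c) \<Rightarrow> (int \<Rightarrow> 'c) \<Rightarrow> int \<Rightarrow> 'c" where
  "coeff_mult sc pr R1 R2 = (\<lambda>p.
     \<Sum>(n, m)\<in>{(n, m). R1 n \<noteq> 0 \<and> R2 m \<noteq> 0 \<and> p \<le> n + m}.
       sc ((of_int n :: 'k) gchoose nat (n + m - p)) (pr (nat (n + m - p)) (R1 n) (R2 m)))"

fun tmon ::
  "('k::field_char_0 \<Rightarrow> 'c::ab_group_add \<Rightarrow> 'c) \<Rightarrow> (nat \<Rightarrow> 'c \<Rightarrow> 'c \<Rightarrow> 'c) \<Rightarrow> bracketing \<Rightarrow>
     (int \<Rightarrow> 'c) list \<Rightarrow> int \<Rightarrow> 'c" where
  "tmon sc pr Leaf us = hd us"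
| "tmon sc pr (Node l r) us =
     coeff_mult sc pr (tmon sc pr l (take (leaves l) us)) (tmon sc pr r (drop (leaves l) us))"

definition Pymap ::
  "('k::field_char_0 \<Rightarrow> 'c::ab_group_add \<Rightarrow> 'c) \<Rightarrow> ('c \<Rightarrow> 'c) \<Rightarrow> nat \<Rightarrow> (nat \<Rightarrow> 'k poly) \<Rightarrow>
     (int \<Rightarrow> 'k) \<Rightarrow> (nat list \<Rightarrow> 'c) \<Rightarrow> int \<Rightarrow> 'c" where
  "Pymap sc Dop n xs y A = coeff_elem sc (Pmap sc Dop n xs A) y"

text \<open>Laurent monomial t^e, and the Laurent polynomial y * S(t^J) = (-1)^J y t^J.\<close>
definition lmono :: "int \<Rightarrow> int \<Rightarrow> 'k::comm_ring_1" where
  "lmono e = (\<lambda>p. if p = e then 1 else 0)"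

definition y_antipode :: "(int \<Rightarrow> 'k::comm_ring_1) \<Rightarrow> nat \<Rightarrow> int \<Rightarrow> 'k" where
  "y_antipode y J = (\<lambda>p. (-1) ^ J * y (p - int J))"

end

(*
  Evaluate an element of H^(x)n (x) C at Laurent monomials t^p1, ..., t^pn, i.e. send
  (h_1 (x) ... (x) h_n) (x) c to (t^p1 h_1) ... (t^pn h_n) (x) c.  On an expanded
  pseudoproduct, the coproduct of (-D)^s/s! is absorbed by Vandermonde's identity and the
  result is the product of Coeff C; since the defining relations of Coeff C span a
  two-sided ideal, induction on the bracketing shows that t^*(b_1, ..., b_n) evaluates
  to t(b_1(t^p1), ..., b_n(t^pn)).  On the other side, theta followed by the pairing
  with S(x_1) (x) ... (x) S(x_(n-1)) sends a monomial D^alpha (x) c to a multiple of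
  D^(k-r) c, which the relation t^p D = -p t^(p-1) turns into a multiple of c(t^(p-k+r)).
  A finite-difference identity for binomial coefficients identifies this multiple with
  the sum, over the Sweedler components t^(k_i-j_i) (x) t^(j_i) of the x_i, of the
  evaluations at t^(k_i-j_i) and at y S(t^(j_1+...+j_(n-1))).  The permutation sigma only
  permutes the evaluation points, and linearity of t in the slot holding y S(...) gives
  the statement.
*)

theory Submission
  imports Defs "HOL-Computational_Algebra.Formal_Power_Series"
begin

lemma sum_fun_apply: "(\<Sum>i\<in>A. f i) x = (\<Sum>i\<in>A. f i x)"
  by (induct A rule: infinite_finite_induct) auto

text \<open>\<open>lmon p c\<close> represents \<open>c(t\<^sup>p) = t\<^sup>p \<otimes>\<^sub>H c\<close>.\<close>
definition lmon :: "int \<Rightarrow> 'c::zero \<Rightarrow> int \<Rightarrow> 'c" where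
  "lmon p c = (\<lambda>q. if q = p then c else 0)"

lemma lmon_0 [simp]: "lmon p 0 = 0"
  by (auto simp: lmon_def fun_eq_iff)

lemma lmon_add: "lmon p (x + y) = lmon p x + lmon p (y::'c::monoid_add)"
  by (auto simp: lmon_def fun_eq_iff)

lemma lmon_sum: "lmon p (\<Sum>i\<in>A. f i) = (\<Sum>i\<in>A. lmon p (f i :: 'c::comm_monoid_add))"
  by (induct A rule: infinite_finite_induct) (auto simp: lmon_add)

text \<open>In \<open>\<Bbbk>[t,t\<^sup>-\<^sup>1]\<close> as a right \<open>H\<close>-module, \<open>t\<^sup>p D\<^sup>k = Dcoeff p k \<cdot> t\<^sup>p\<^sup>-\<^sup>k\<close>.\<close>
definition Dcoeff :: "'k::field_char_0 \<Rightarrow> nat \<Rightarrow> 'k" where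
  "Dcoeff x k = (-1) ^ k * fact k * (x gchoose k)"

lemma Dcoeff_0 [simp]: "Dcoeff x 0 = 1"
  by (simp add: Dcoeff_def)

lemma Dcoeff_Suc: "Dcoeff x (Suc k) = - x * Dcoeff (x - 1) k"
proof -
  have "Dcoeff x (Suc k) = - ((-1) ^ k * fact k * (of_nat (Suc k) * (x gchoose Suc k)))"
    by (simp add: Dcoeff_def fact_Suc mult_ac)
  also have "\<dots> = - ((-1) ^ k * fact k * (x * ((x - 1) gchoose k)))"
    by (simp only: gbinomial_absorption)
  finally show ?thesis
    by (simp add: Dcoeff_def mult_ac)
qed

definition fin_supp :: "('a \<Rightarrow> 'c::zero) \<Rightarrow> bool" where
  "fin_supp R \<longleftrightarrow> finite {p. R p \<noteq> 0}"

lemma fin_supp_0 [simp]: "fin_supp 0"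
  by (simp add: fin_supp_def)

lemma fin_supp_add: "fin_supp R \<Longrightarrow> fin_supp S \<Longrightarrow> fin_supp (R + (S :: _ \<Rightarrow> 'c::monoid_add))"
  unfolding fin_supp_def by (rule finite_subset[of _ "{p. R p \<noteq> 0} \<union> {p. S p \<noteq> 0}"]) auto

lemma fin_supp_diff: "fin_supp R \<Longrightarrow> fin_supp S \<Longrightarrow> fin_supp (R - (S :: _ \<Rightarrow> 'c::group_add))"
  unfolding fin_supp_def by (rule finite_subset[of _ "{p. R p \<noteq> 0} \<union> {p. S p \<noteq> 0}"]) auto

lemma fin_supp_sum:
  "(\<And>i. i \<in> A \<Longrightarrow> fin_supp (f i)) \<Longrightarrow> fin_supp (\<Sum>i\<in>A. (f i :: _ \<Rightarrow> 'c::comm_monoid_add))"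
  by (induct A rule: infinite_finite_induct) (auto intro: fin_supp_add)

lemma fin_supp_lmon [simp]: "fin_supp (lmon p c)"
  unfolding fin_supp_def lmon_def by (rule finite_subset[of _ "{p}"]) auto

locale conf_alg =
  fixes sc :: "'k::field_char_0 \<Rightarrow> 'c::ab_group_add \<Rightarrow> 'c"
    and Dop :: "'c \<Rightarrow> 'c" and pr :: "nat \<Rightarrow> 'c \<Rightarrow> 'c \<Rightarrow> 'c"
  assumes conformal: "conformal_algebra sc Dop pr"
begin

sublocale V: vector_space sc
  using conformal by (simp add: conformal_algebra_def)

lemma D_hom: "module_hom sc sc Dop"
  and pr_hom_right: "module_hom sc sc (pr n a)"
  and pr_hom_left: "module_hom sc sc (\<lambda>a. pr n a b)"
  using conformal by (simp_all add: conformal_algebra_def module_hom_iff_linear)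

lemma locality: "\<exists>N. \<forall>n\<ge>N. pr n a b = 0"
  and sesqui_left: "pr n (Dop a) b = sc (- of_nat n) (pr (n - 1) a b)"
  and sesqui_right: "pr n a (Dop b) = Dop (pr n a b) + sc (of_nat n) (pr (n - 1) a b)"
  using conformal unfolding conformal_algebra_def by blast+

lemmas D_scale = module_hom.scale[OF D_hom] and D_zero [simp] = module_hom.zero[OF D_hom]
lemmas pr_add_right = module_hom.add[OF pr_hom_right]
  and pr_scale_right = module_hom.scale[OF pr_hom_right]
  and pr_zero_right [simp] = module_hom.zero[OF pr_hom_right]
  and pr_sum_right = module_hom.sum[OF pr_hom_right]
lemmas pr_add_left = module_hom.add[OF pr_hom_left]
  and pr_scale_left = module_hom.scale[OF pr_hom_left]
  and pr_zero_left [simp] = module_hom.zero[OF pr_hom_left]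
  and pr_sum_left = module_hom.sum[OF pr_hom_left]

lemma Dpow_scale: "(Dop ^^ k) (sc a c) = sc a ((Dop ^^ k) c)"
  by (induct k) (auto simp: D_scale)

lemma Dpow_zero [simp]: "(Dop ^^ k) 0 = 0"
  by (induct k) auto

abbreviation vsc :: "'k \<Rightarrow> (int \<Rightarrow> 'c) \<Rightarrow> int \<Rightarrow> 'c" where
  "vsc \<equiv> \<lambda>r f p. sc r (f p)"

sublocale F: vector_space vsc
  by unfold_locales (auto simp: fun_eq_iff V.scale_right_distrib V.scale_left_distrib)

definition rel_span :: "(int \<Rightarrow> 'c) set" where
  "rel_span = F.span (coeff_rel sc Dop)"

definition ceq :: "(int \<Rightarrow> 'c) \<Rightarrow> (int \<Rightarrow> 'c) \<Rightarrow> bool" (infix \<open>\<approx>\<close> 50) where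
  "R1 \<approx> R2 \<longleftrightarrow> coeff_eq sc Dop R1 R2"

lemma ceq_iff: "R1 \<approx> R2 \<longleftrightarrow> R1 - R2 \<in> rel_span"
  by (simp add: ceq_def coeff_eq_def rel_span_def)

lemma ceq_refl [simp]: "R \<approx> R"
  by (simp add: ceq_iff rel_span_def F.span_zero)

lemma ceq_sym: "R1 \<approx> R2 \<Longrightarrow> R2 \<approx> R1"
  unfolding ceq_iff rel_span_def using F.span_neg by fastforce

lemma ceq_trans [trans]: "R1 \<approx> R2 \<Longrightarrow> R2 \<approx> R3 \<Longrightarrow> R1 \<approx> R3"
  unfolding ceq_iff rel_span_def using F.span_add by fastforce

lemma ceq_eq_trans [trans]: "R1 \<approx> R2 \<Longrightarrow> R2 = R3 \<Longrightarrow> R1 \<approx> R3"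
  by simp

lemma eq_ceq_trans [trans]: "R1 = R2 \<Longrightarrow> R2 \<approx> R3 \<Longrightarrow> R1 \<approx> R3"
  by simp

lemma ceq_add: "R1 \<approx> R2 \<Longrightarrow> S1 \<approx> S2 \<Longrightarrow> R1 + S1 \<approx> R2 + S2"
  unfolding ceq_iff rel_span_def using F.span_add by (fastforce simp: add_diff_add)

lemma ceq_vsc: "R1 \<approx> R2 \<Longrightarrow> vsc c R1 \<approx> vsc c R2"
proof -
  assume "R1 \<approx> R2"
  then have "vsc c (R1 - R2) \<in> rel_span"
    unfolding ceq_iff rel_span_def by (rule F.span_scale)
  moreover have "vsc c (R1 - R2) = vsc c R1 - vsc c R2"
    by (auto simp: fun_eq_iff V.scale_right_diff_distrib)
  ultimately show ?thesis by (simp add: ceq_iff)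
qed

lemma ceq_sum: "(\<And>i. i \<in> A \<Longrightarrow> f i \<approx> g i) \<Longrightarrow> (\<Sum>i\<in>A. f i) \<approx> (\<Sum>i\<in>A. g i)"
  by (induct A rule: infinite_finite_induct) (auto intro: ceq_add)

lemma lmon_scale: "lmon p (sc c x) = vsc c (lmon p x)"
  by (auto simp: lmon_def fun_eq_iff)

lemma vsc_sum: "vsc c (\<Sum>i\<in>A. f i) = (\<Sum>i\<in>A. vsc c (f i))"
  by (auto simp: fun_eq_iff sum_fun_apply V.scale_sum_right)

lemma fin_supp_vsc: "fin_supp R \<Longrightarrow> fin_supp (vsc c R)"
  unfolding fin_supp_def by (rule finite_subset) auto

lemma coeff_rel_eq: "coeff_rel sc Dop = {lmon (m - 1) (sc (- of_int m) c) - lmon m (Dop c) | m c. True}"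
  unfolding coeff_rel_def by (auto simp: fun_eq_iff lmon_def)

lemma lmon_D_ceq: "lmon p (Dop c) \<approx> lmon (p - 1) (sc (- of_int p) c)"
proof -
  have "lmon (p - 1) (sc (- of_int p) c) - lmon p (Dop c) \<in> rel_span"
    unfolding rel_span_def coeff_rel_eq by (rule F.span_base) blast
  then show ?thesis
    unfolding rel_span_def by (metis F.span_neg ceq_iff minus_diff_eq rel_span_def)
qed

lemma lmon_Dpow_ceq: "lmon p ((Dop ^^ k) c) \<approx> lmon (p - int k) (sc (Dcoeff (of_int p) k) c)"
proof (induct k arbitrary: p)
  case (Suc k)
  have "lmon p ((Dop ^^ Suc k) c) \<approx> lmon (p - 1) (sc (- of_int p) ((Dop ^^ k) c))"
    using lmon_D_ceq by simp
  also have "\<dots> = vsc (- of_int p) (lmon (p - 1) ((Dop ^^ k) c))"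
    by (rule lmon_scale)
  also have "\<dots> \<approx> vsc (- of_int p) (lmon (p - 1 - int k) (sc (Dcoeff (of_int (p - 1)) k) c))"
    by (rule ceq_vsc) (rule Suc)
  also have "\<dots> = lmon (p - 1 - int k) (sc (- of_int p * Dcoeff (of_int (p - 1)) k) c)"
    by (simp only: lmon_scale[symmetric] V.scale_scale)
  also have "\<dots> = lmon (p - int (Suc k)) (sc (Dcoeff (of_int p) (Suc k)) c)"
    by (simp add: Dcoeff_Suc algebra_simps)
  finally show ?case .
qed simp

definition lmon_mult :: "int \<Rightarrow> 'c \<Rightarrow> int \<Rightarrow> 'c \<Rightarrow> int \<Rightarrow> 'c" where
  "lmon_mult n a m b = (\<lambda>p. if p \<le> n + m
     then sc ((of_int n :: 'k) gchoose nat (n + m - p)) (pr (nat (n + m - p)) a b) else 0)"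

lemma lmon_mult_eq_sum:
  assumes N: "\<forall>s\<ge>N. pr s a b = 0"
  shows "lmon_mult n a m b = (\<Sum>s<N. lmon (n + m - int s) (sc ((of_int n :: 'k) gchoose s) (pr s a b)))"
proof
  fix p
  show "lmon_mult n a m b p = (\<Sum>s<N. lmon (n + m - int s) (sc ((of_int n :: 'k) gchoose s) (pr s a b))) p"
  proof (cases "p \<le> n + m")
    case True
    have "(\<Sum>s<N. lmon (n + m - int s) (sc ((of_int n :: 'k) gchoose s) (pr s a b))) p
        = (\<Sum>s<N. if s = nat (n + m - p) then sc ((of_int n :: 'k) gchoose s) (pr s a b) else 0)"
      unfolding sum_fun_apply by (rule sum.cong) (use True in \<open>auto simp: lmon_def\<close>)
    also have "\<dots> = lmon_mult n a m b p"
      using True N by (auto simp: lmon_mult_def)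
    finally show ?thesis by simp
  qed (auto simp: lmon_mult_def sum_fun_apply lmon_def intro!: sum.neutral)
qed

lemma fin_supp_lmon_mult: "fin_supp (lmon_mult n a m b)"
proof -
  obtain N where "\<forall>s\<ge>N. pr s a b = 0" using locality by blast
  then show ?thesis by (simp add: lmon_mult_eq_sum fin_supp_sum)
qed

lemma lmon_mult_add_left: "lmon_mult n (a + a') m b = lmon_mult n a m b + lmon_mult n a' m b"
  and lmon_mult_add_right: "lmon_mult n a m (b + b') = lmon_mult n a m b + lmon_mult n a m b'"
  and lmon_mult_scale_left: "lmon_mult n (sc c a) m b = vsc c (lmon_mult n a m b)"
  and lmon_mult_scale_right: "lmon_mult n a m (sc c b) = vsc c (lmon_mult n a m b)"
  by (auto simp: lmon_mult_def fun_eq_iff pr_add_left pr_add_right pr_scale_left pr_scale_right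
      V.scale_right_distrib mult.commute)

lemma coeff_mult_expand:
  assumes "finite S1" "finite S2" "{p. R1 p \<noteq> 0} \<subseteq> S1" "{p. R2 p \<noteq> 0} \<subseteq> S2"
  shows "coeff_mult sc pr R1 R2 = (\<Sum>n\<in>S1. \<Sum>m\<in>S2. lmon_mult n (R1 n) m (R2 m))"
proof
  fix p
  have "(\<Sum>n\<in>S1. \<Sum>m\<in>S2. lmon_mult n (R1 n) m (R2 m)) p
      = (\<Sum>(n, m)\<in>S1 \<times> S2. lmon_mult n (R1 n) m (R2 m) p)"
    unfolding sum_fun_apply by (rule sum.cartesian_product)
  also have "\<dots> = (\<Sum>(n, m)\<in>{(n, m). R1 n \<noteq> 0 \<and> R2 m \<noteq> 0 \<and> p \<le> n + m}.
       sc ((of_int n :: 'k) gchoose nat (n + m - p)) (pr (nat (n + m - p)) (R1 n) (R2 m)))"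
    using assms by (intro sum.mono_neutral_cong_right) (auto simp: lmon_mult_def split: if_splits)
  finally show "coeff_mult sc pr R1 R2 p = (\<Sum>n\<in>S1. \<Sum>m\<in>S2. lmon_mult n (R1 n) m (R2 m)) p"
    by (simp add: coeff_mult_def)
qed

lemma coeff_mult_expand_supp:
  "fin_supp R1 \<Longrightarrow> fin_supp R2 \<Longrightarrow> coeff_mult sc pr R1 R2 =
     (\<Sum>n\<in>{p. R1 p \<noteq> 0}. \<Sum>m\<in>{p. R2 p \<noteq> 0}. lmon_mult n (R1 n) m (R2 m))"
  by (rule coeff_mult_expand) (auto simp: fin_supp_def)

lemma coeff_mult_lmon: "coeff_mult sc pr (lmon n a) (lmon m b) = lmon_mult n a m b"
  by (subst coeff_mult_expand[of "{n}" "{m}"]) (auto simp: lmon_def)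

lemma coeff_mult_lmon_left:
  "fin_supp R \<Longrightarrow> coeff_mult sc pr (lmon n a) R = (\<Sum>m\<in>{p. R p \<noteq> 0}. lmon_mult n a m (R m))"
  by (subst coeff_mult_expand[of "{n}"]) (auto simp: lmon_def fin_supp_def)

lemma coeff_mult_lmon_right:
  "fin_supp R \<Longrightarrow> coeff_mult sc pr R (lmon m b) = (\<Sum>n\<in>{p. R p \<noteq> 0}. lmon_mult n (R n) m b)"
  by (subst coeff_mult_expand[of _ "{m}"]) (auto simp: lmon_def fin_supp_def)

lemma fin_supp_coeff_mult: "fin_supp R1 \<Longrightarrow> fin_supp R2 \<Longrightarrow> fin_supp (coeff_mult sc pr R1 R2)"
  by (simp add: coeff_mult_expand_supp fin_supp_sum fin_supp_lmon_mult)

lemma coeff_mult_add_left: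
  assumes "fin_supp R" "fin_supp R'" "fin_supp S"
  shows "coeff_mult sc pr (R + R') S = coeff_mult sc pr R S + coeff_mult sc pr R' S"
proof -
  have f: "finite ({p. R p \<noteq> 0} \<union> {p. R' p \<noteq> 0})" "finite {p. S p \<noteq> 0}"
    using assms by (auto simp: fin_supp_def)
  show ?thesis
    by (subst (1 2 3) coeff_mult_expand[OF f _ subset_refl]) (auto simp: lmon_mult_add_left sum.distrib)
qed

lemma coeff_mult_add_right:
  assumes "fin_supp R" "fin_supp S" "fin_supp S'"
  shows "coeff_mult sc pr R (S + S') = coeff_mult sc pr R S + coeff_mult sc pr R S'"
proof -
  have f: "finite {p. R p \<noteq> 0}" "finite ({p. S p \<noteq> 0} \<union> {p. S' p \<noteq> 0})"
    using assms by (auto simp: fin_supp_def)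
  show ?thesis
    by (subst (1 2 3) coeff_mult_expand[OF f subset_refl]) (auto simp: lmon_mult_add_right sum.distrib)
qed

lemma coeff_mult_vsc_left:
  "fin_supp R \<Longrightarrow> fin_supp S \<Longrightarrow> coeff_mult sc pr (vsc c R) S = vsc c (coeff_mult sc pr R S)"
  by (subst (1 2) coeff_mult_expand[of "{p. R p \<noteq> 0}" "{p. S p \<noteq> 0}"])
    (auto simp: fin_supp_def lmon_mult_scale_left vsc_sum)

lemma coeff_mult_vsc_right:
  "fin_supp R \<Longrightarrow> fin_supp S \<Longrightarrow> coeff_mult sc pr R (vsc c S) = vsc c (coeff_mult sc pr R S)"
  by (subst (1 2) coeff_mult_expand[of "{p. R p \<noteq> 0}" "{p. S p \<noteq> 0}"])
    (auto simp: fin_supp_def lmon_mult_scale_right vsc_sum)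

lemma coeff_mult_diff_left:
  assumes "fin_supp R" "fin_supp R'" "fin_supp S"
  shows "coeff_mult sc pr (R - R') S = coeff_mult sc pr R S - coeff_mult sc pr R' S"
  using coeff_mult_add_left[of "R - R'" R' S] assms by (simp add: fin_supp_diff eq_diff_eq)

lemma coeff_mult_diff_right:
  assumes "fin_supp R" "fin_supp S" "fin_supp S'"
  shows "coeff_mult sc pr R (S - S') = coeff_mult sc pr R S - coeff_mult sc pr R S'"
  using coeff_mult_add_right[of R "S - S'" S'] assms by (simp add: fin_supp_diff eq_diff_eq)

lemma coeff_mult_sum_left:
  "(\<And>i. i \<in> A \<Longrightarrow> fin_supp (R i)) \<Longrightarrow> fin_supp S \<Longrightarrow>
    coeff_mult sc pr (\<Sum>i\<in>A. R i) S = (\<Sum>i\<in>A. coeff_mult sc pr (R i) S)"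
proof (induct A rule: infinite_finite_induct)
  case (insert x F)
  then have "coeff_mult sc pr (R x + (\<Sum>i\<in>F. R i)) S
      = coeff_mult sc pr (R x) S + (\<Sum>i\<in>F. coeff_mult sc pr (R i) S)"
    by (subst coeff_mult_add_left) (auto intro: fin_supp_sum)
  then show ?case
    by (simp only: sum.insert[OF insert(1,2)])
qed (auto simp: coeff_mult_def)

lemma coeff_mult_sum_right:
  "(\<And>i. i \<in> A \<Longrightarrow> fin_supp (S i)) \<Longrightarrow> fin_supp R \<Longrightarrow>
    coeff_mult sc pr R (\<Sum>i\<in>A. S i) = (\<Sum>i\<in>A. coeff_mult sc pr R (S i))"
proof (induct A rule: infinite_finite_induct)
  case (insert x F)
  then have "coeff_mult sc pr R (S x + (\<Sum>i\<in>F. S i))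
      = coeff_mult sc pr R (S x) + (\<Sum>i\<in>F. coeff_mult sc pr R (S i))"
    by (subst coeff_mult_add_right) (auto intro: fin_supp_sum)
  then show ?case
    by (simp only: sum.insert[OF insert(1,2)])
qed (auto simp: coeff_mult_def)

section \<open>The relations form a two-sided ideal\<close>

lemma fin_supp_rel_span: "R \<in> rel_span \<Longrightarrow> fin_supp R"
  unfolding rel_span_def
proof (induct rule: F.span_induct)
  case base
  show ?case by (rule F.subspaceI) (auto intro: fin_supp_add fin_supp_vsc)
qed (auto simp: coeff_rel_eq intro!: fin_supp_diff)

lemma ceq_fin_supp: "R1 \<approx> R2 \<Longrightarrow> fin_supp R2 \<Longrightarrow> fin_supp R1"
  using fin_supp_add[of "R1 - R2" R2] by (simp add: ceq_iff fin_supp_rel_span)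

lemma rel_span_closed:
  assumes add: "\<And>x y. fin_supp x \<Longrightarrow> fin_supp y \<Longrightarrow> f (x + y) = f x + f y"
    and scale: "\<And>c x. fin_supp x \<Longrightarrow> f (vsc c x) = vsc c (f x)"
    and gen: "\<And>g. g \<in> coeff_rel sc Dop \<Longrightarrow> f g \<in> rel_span"
    and g: "g \<in> rel_span"
  shows "f g \<in> rel_span"
proof -
  have "f 0 = 0"
    using add[of 0 0] by simp
  have "fin_supp g \<and> f g \<in> rel_span"
    using g unfolding rel_span_def
  proof (induct rule: F.span_induct)
    case base
    show ?case
      by (rule F.subspaceI)
        (use \<open>f 0 = 0\<close> in \<open>auto simp: add scale fin_supp_add fin_supp_vsc F.span_zero
           intro: F.span_add F.span_scale\<close>)
  next
    case (step x)
    then show ?case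
      using gen by (auto simp: coeff_rel_eq rel_span_def intro!: fin_supp_diff)
  qed
  then show ?thesis by simp
qed

lemma lmon_mult_rel_left: "lmon_mult (m - 1) (sc (- of_int m) c) m' b = lmon_mult m (Dop c) m' b"
proof
  fix p
  show "lmon_mult (m - 1) (sc (- of_int m) c) m' b p = lmon_mult m (Dop c) m' b p"
  proof (cases "p \<le> m - 1 + m'")
    case True
    define k where "k = nat (m - 1 + m' - p)"
    have k: "nat (m + m' - p) = Suc k" "nat (m - 1 + m' - p) = k"
      using True unfolding k_def by arith+
    have "(of_int (m - 1) gchoose k) * (- of_int m) = - (of_int m * ((of_int m - 1) gchoose k) :: 'k)"
      by (simp add: mult.commute)
    also have "\<dots> = ((of_int m :: 'k) gchoose Suc k) * (- of_nat (Suc k))"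
      by (simp only: gbinomial_absorption[symmetric]) (simp add: algebra_simps)
    finally have e: "(of_int (m - 1) gchoose k) * (- of_int m)
        = ((of_int m :: 'k) gchoose Suc k) * (- of_nat (Suc k))" .
    have "lmon_mult (m - 1) (sc (- of_int m) c) m' b p
        = sc ((of_int (m - 1) gchoose k) * (- of_int m)) (pr k c b)"
      unfolding lmon_mult_def using True by (simp only: if_True k(2) pr_scale_left V.scale_scale)
    also have "\<dots> = lmon_mult m (Dop c) m' b p"
      unfolding lmon_mult_def e using True
      by (simp only: k(1) sesqui_left V.scale_scale diff_Suc_1 if_True) simp
    finally show ?thesis .
  next
    case False
    then show ?thesis
      by (cases "p = m + m'") (simp_all add: lmon_mult_def sesqui_left)
  qed
qed

lemma gchoose_rel_right_coeff:
  "- of_int (n + M - int s) * ((of_int n :: 'k) gchoose s) + ((of_int n :: 'k) gchoose Suc s) * of_nat (Suc s)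
   = ((of_int n :: 'k) gchoose s) * (- of_int M)"
proof -
  have "((of_int n :: 'k) gchoose Suc s) * of_nat (Suc s) = (of_int n - of_nat s) * ((of_int n :: 'k) gchoose s)"
    using gbinomial_absorption[of s "of_int n :: 'k"] gbinomial_absorb_comp[of "of_int n :: 'k" s]
    by (simp add: mult.commute)
  then show ?thesis by (simp add: algebra_simps)
qed

text \<open>Sesquilinearity in the second argument produces a \<open>D\<close>-term, which is rewritten by the
  relation; the remaining terms recombine by \<open>gchoose_rel_right_coeff\<close>.\<close>
lemma lmon_mult_rel_right: "lmon_mult n a (M - 1) (sc (- of_int M) b) \<approx> lmon_mult n a M (Dop b)"
proof -
  obtain N where N: "\<forall>s\<ge>N. pr s a b = 0" using locality by blast
  have N_Dop: "\<forall>s\<ge>Suc N. pr s a (Dop b) = 0"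
    using N by (auto simp: sesqui_right)
  have N_scale: "\<forall>s\<ge>N. pr s a (sc (- of_int M) b) = 0"
    using N by (simp add: pr_scale_right del: V.scale_minus_left)
  define T1 where "T1 s = lmon (n + M - 1 - int s) (sc (- of_int (n + M - int s) * ((of_int n :: 'k) gchoose s)) (pr s a b))" for s
  define T2 where "T2 s = lmon (n + M - int s) (sc (((of_int n :: 'k) gchoose s) * of_nat s) (pr (s - 1) a b))" for s
  have T1_N: "T1 N = 0" and T2_0: "T2 0 = 0"
    using N by (simp_all add: T1_def T2_def)
  have "lmon_mult n a (M - 1) (sc (- of_int M) b)
      = (\<Sum>s<N. lmon (n + M - 1 - int s) (sc (((of_int n :: 'k) gchoose s) * (- of_int M)) (pr s a b)))"
    unfolding lmon_mult_eq_sum[OF N_scale]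
    by (rule sum.cong) (simp_all only: pr_scale_right V.scale_scale add_diff_eq)
  also have "\<dots> = (\<Sum>s<N. T1 s + T2 (Suc s))"
  proof (rule sum.cong)
    fix s
    have e: "n + M - int (Suc s) = n + M - 1 - int s" by simp
    show "lmon (n + M - 1 - int s) (sc (((of_int n :: 'k) gchoose s) * (- of_int M)) (pr s a b))
        = T1 s + T2 (Suc s)"
      unfolding T1_def T2_def e diff_Suc_1 lmon_add[symmetric] V.scale_left_distrib[symmetric]
        gchoose_rel_right_coeff ..
  qed simp
  also have "\<dots> = (\<Sum>s<Suc N. T1 s + T2 s)"
  proof -
    have "(\<Sum>s<Suc N. T1 s) = (\<Sum>s<N. T1 s)"
      by (simp add: T1_N)
    moreover have "(\<Sum>s<Suc N. T2 s) = (\<Sum>s<N. T2 (Suc s))"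
      by (simp only: sum.lessThan_Suc_shift T2_0 add_0)
    ultimately show ?thesis
      by (simp add: sum.distrib)
  qed
  also have "\<dots> \<approx> (\<Sum>s<Suc N. lmon (n + M - int s) (Dop (sc ((of_int n :: 'k) gchoose s) (pr s a b))) + T2 s)"
  proof (rule ceq_sum, rule ceq_add)
    fix s
    have "lmon (n + M - int s) (Dop (sc ((of_int n :: 'k) gchoose s) (pr s a b)))
        \<approx> lmon (n + M - int s - 1) (sc (- of_int (n + M - int s)) (sc ((of_int n :: 'k) gchoose s) (pr s a b)))"
      by (rule lmon_D_ceq)
    also have "\<dots> = T1 s"
      by (simp add: T1_def V.scale_scale algebra_simps)
    finally show "T1 s \<approx> lmon (n + M - int s) (Dop (sc ((of_int n :: 'k) gchoose s) (pr s a b)))"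
      by (rule ceq_sym)
  qed simp
  also have "\<dots> = (\<Sum>s<Suc N. lmon (n + M - int s) (sc ((of_int n :: 'k) gchoose s) (pr s a (Dop b))))"
    by (rule sum.cong)
      (simp_all only: T2_def sesqui_right V.scale_right_distrib D_scale V.scale_scale lmon_add)
  also have "\<dots> = lmon_mult n a M (Dop b)"
    unfolding lmon_mult_eq_sum[OF N_Dop] ..
  finally show ?thesis .
qed

lemma coeff_mult_rel_span_left:
  assumes "g \<in> rel_span" "fin_supp R"
  shows "coeff_mult sc pr g R \<in> rel_span"
  using assms(1)
proof (rule rel_span_closed[rotated 3])
  fix h assume "h \<in> coeff_rel sc Dop"
  then obtain m c where h: "h = lmon (m - 1) (sc (- of_int m) c) - lmon m (Dop c)"
    by (auto simp: coeff_rel_eq)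
  have "coeff_mult sc pr h R = 0"
    unfolding h using assms(2)
    by (simp add: coeff_mult_diff_left coeff_mult_lmon_left lmon_mult_rel_left del: V.scale_minus_left)
  then show "coeff_mult sc pr h R \<in> rel_span"
    by (simp add: rel_span_def F.span_zero)
next
  show "coeff_mult sc pr (x + y) R = coeff_mult sc pr x R + coeff_mult sc pr y R" if "fin_supp x" "fin_supp y" for x y
    using that assms(2) by (intro coeff_mult_add_left)
  show "coeff_mult sc pr (vsc c x) R = vsc c (coeff_mult sc pr x R)" if "fin_supp x" for c x
    using that assms(2) by (intro coeff_mult_vsc_left)
qed

lemma coeff_mult_rel_span_right:
  assumes "g \<in> rel_span" "fin_supp R"
  shows "coeff_mult sc pr R g \<in> rel_span"
  using assms(1)
proof (rule rel_span_closed[rotated 3])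
  fix h assume "h \<in> coeff_rel sc Dop"
  then obtain m c where h: "h = lmon (m - 1) (sc (- of_int m) c) - lmon m (Dop c)"
    by (auto simp: coeff_rel_eq)
  have "coeff_mult sc pr R h = (\<Sum>n\<in>{p. R p \<noteq> 0}.
      lmon_mult n (R n) (m - 1) (sc (- of_int m) c) - lmon_mult n (R n) m (Dop c))"
    unfolding h using assms(2) by (simp add: coeff_mult_diff_right coeff_mult_lmon_right sum_subtractf)
  also have "\<dots> \<in> rel_span"
    unfolding rel_span_def
    by (rule F.span_sum) (use lmon_mult_rel_right in \<open>simp add: ceq_iff rel_span_def\<close>)
  finally show "coeff_mult sc pr R h \<in> rel_span" .
next
  show "coeff_mult sc pr R (x + y) = coeff_mult sc pr R x + coeff_mult sc pr R y" if "fin_supp x" "fin_supp y" for x y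
    using that assms(2) by (intro coeff_mult_add_right)
  show "coeff_mult sc pr R (vsc c x) = vsc c (coeff_mult sc pr R x)" if "fin_supp x" for c x
    using that assms(2) by (intro coeff_mult_vsc_right)
qed

lemma coeff_mult_ceq:
  assumes "R1 \<approx> R1'" "R2 \<approx> R2'" "fin_supp R1'" "fin_supp R2'"
  shows "coeff_mult sc pr R1 R2 \<approx> coeff_mult sc pr R1' R2'"
proof -
  have f: "fin_supp R1" "fin_supp R2"
    using assms ceq_fin_supp by blast+
  have "coeff_mult sc pr R1 R2 - coeff_mult sc pr R1' R2 = coeff_mult sc pr (R1 - R1') R2"
    using f assms by (simp add: coeff_mult_diff_left)
  also have "\<dots> \<in> rel_span"
    using assms(1) f by (intro coeff_mult_rel_span_left) (auto simp: ceq_iff)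
  finally have "coeff_mult sc pr R1 R2 \<approx> coeff_mult sc pr R1' R2"
    by (simp add: ceq_iff)
  also have "coeff_mult sc pr R1' R2 - coeff_mult sc pr R1' R2' = coeff_mult sc pr R1' (R2 - R2')"
    using f assms by (simp add: coeff_mult_diff_right)
  then have "coeff_mult sc pr R1' R2 \<approx> coeff_mult sc pr R1' R2'"
    using coeff_mult_rel_span_right[of "R2 - R2'" R1'] assms(2,3) by (simp add: ceq_iff)
  finally show ?thesis .
qed

end

lemma leaves_pos: "leaves t > 0"
  by (induct t) auto

context conf_alg
begin

lemma fin_supp_tmon:
  "length us = leaves tr \<Longrightarrow> \<forall>u\<in>set us. fin_supp u \<Longrightarrow> fin_supp (tmon sc pr tr us)"
proof (induct tr arbitrary: us)
  case Leaf
  then show ?case by (cases us) auto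
next
  case (Node l r)
  then show ?case
    by (simp, intro fin_supp_coeff_mult Node.hyps) (auto dest: in_set_takeD in_set_dropD)
qed

lemma coeff_mult_lincomb_left:
  "(\<And>p. p \<in> S \<Longrightarrow> fin_supp (v p)) \<Longrightarrow> fin_supp R \<Longrightarrow>
    coeff_mult sc pr (\<Sum>p\<in>S. vsc (c p) (v p)) R = (\<Sum>p\<in>S. vsc (c p) (coeff_mult sc pr (v p) R))"
  by (simp add: coeff_mult_sum_left fin_supp_vsc coeff_mult_vsc_left)

lemma coeff_mult_lincomb_right:
  "(\<And>p. p \<in> S \<Longrightarrow> fin_supp (v p)) \<Longrightarrow> fin_supp R \<Longrightarrow>
    coeff_mult sc pr R (\<Sum>p\<in>S. vsc (c p) (v p)) = (\<Sum>p\<in>S. vsc (c p) (coeff_mult sc pr R (v p)))"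
  by (simp add: coeff_mult_sum_right fin_supp_vsc coeff_mult_vsc_right)

lemma tmon_lincomb_slot:
  assumes "length us = leaves tr" "i < length us" "\<forall>u\<in>set us. fin_supp u"
    "\<And>p. p \<in> S \<Longrightarrow> fin_supp (v p)"
  shows "tmon sc pr tr (us[i := (\<Sum>p\<in>S. vsc (c p) (v p))])
    = (\<Sum>p\<in>S. vsc (c p) (tmon sc pr tr (us[i := v p])))"
  using assms
proof (induct tr arbitrary: us i)
  case Leaf
  then obtain u where "us = [u]" by (cases us) auto
  with Leaf show ?case by simp
next
  case (Node l r)
  let ?n = "leaves l"
  have fin_supp_upd: "\<forall>u\<in>set (xs[j := v p]). fin_supp u"
    if "set xs \<subseteq> set us" "p \<in> S" for xs j p
    using Node.prems that by (auto dest!: set_update_subset_insert[THEN subsetD])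
  show ?case
  proof (cases "i < ?n")
    case True
    have "fin_supp (tmon sc pr r (drop ?n us))"
      using Node.prems by (intro fin_supp_tmon) (auto dest: in_set_dropD)
    moreover have "fin_supp (tmon sc pr l ((take ?n us)[i := v p]))" if "p \<in> S" for p
      using Node.prems fin_supp_upd[OF set_take_subset that] by (intro fin_supp_tmon) auto
    moreover have "tmon sc pr l ((take ?n us)[i := (\<Sum>p\<in>S. vsc (c p) (v p))])
        = (\<Sum>p\<in>S. vsc (c p) (tmon sc pr l ((take ?n us)[i := v p])))"
      using Node.prems True by (intro Node.hyps(1)) (auto dest: in_set_takeD)
    ultimately show ?thesis
      using True by (simp add: take_update_swap coeff_mult_lincomb_left)
  next
    case False
    have "fin_supp (tmon sc pr l (take ?n us))"
      using Node.prems by (intro fin_supp_tmon) (auto dest: in_set_takeD)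
    moreover have "fin_supp (tmon sc pr r ((drop ?n us)[i - ?n := v p]))" if "p \<in> S" for p
      using Node.prems fin_supp_upd[OF set_drop_subset that] by (intro fin_supp_tmon) auto
    moreover have "tmon sc pr r ((drop ?n us)[i - ?n := (\<Sum>p\<in>S. vsc (c p) (v p))])
        = (\<Sum>p\<in>S. vsc (c p) (tmon sc pr r ((drop ?n us)[i - ?n := v p])))"
      using Node.prems False by (intro Node.hyps(2)) (auto dest: in_set_dropD)
    ultimately show ?thesis
      using False by (simp add: drop_update_swap coeff_mult_lincomb_right)
  qed
qed

end

section \<open>Vandermonde's identity for the action of \<open>D\<close>\<close>

definition weak_comps :: "nat \<Rightarrow> nat \<Rightarrow> nat list set" where
  "weak_comps n s = {j. length j = n \<and> sum_list j = s}"

lemma finite_weak_comps [simp]: "finite (weak_comps n s)"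
proof (rule finite_subset)
  show "weak_comps n s \<subseteq> {xs. set xs \<subseteq> {..s} \<and> length xs = n}"
    unfolding weak_comps_def by (auto simp: member_le_sum_list)
qed (simp add: finite_lists_length_eq)

lemma weak_comps_0 [simp]: "weak_comps 0 s = (if s = 0 then {[]} else {})"
  by (auto simp: weak_comps_def)

lemma sum_weak_comps_Suc:
  "(\<Sum>j\<in>weak_comps (Suc n) s. f j) = (\<Sum>x\<le>s. \<Sum>j\<in>weak_comps n (s - x). f (x # j))"
proof -
  have "weak_comps (Suc n) s = (\<lambda>(x, j). x # j) ` (SIGMA x:{..s}. weak_comps n (s - x))"
    by (auto simp: weak_comps_def image_iff length_Suc_conv)
  moreover have "inj_on (\<lambda>(x, j). x # j) (SIGMA x:{..s}. weak_comps n (s - x))"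
    by (auto simp: inj_on_def)
  ultimately show ?thesis
    by (simp add: sum.reindex sum.Sigma split_def)
qed

lemma gchoose_Vandermonde_list:
  "(\<Sum>j\<in>weak_comps (length qs) s. prod_list (map2 (gchoose) qs j)) = (sum_list qs gchoose s :: 'k::field_char_0)"
proof (induct qs arbitrary: s)
  case Nil
  then show ?case by (simp add: gbinomial_0_left)
next
  case (Cons q qs)
  have "(\<Sum>j\<in>weak_comps (length (q # qs)) s. prod_list (map2 (gchoose) (q # qs) j))
      = (\<Sum>x\<le>s. (q gchoose x) * (sum_list qs gchoose (s - x)))"
    by (simp add: sum_weak_comps_Suc sum_distrib_left[symmetric] Cons)
  also have "\<dots> = (q + sum_list qs) gchoose s"
    using gbinomial_Vandermonde[of q "sum_list qs" s] by (simp add: atLeast0AtMost)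
  finally show ?case by simp
qed

text \<open>\<open>t\<^sup>p\<^sup>1 \<otimes> \<dots> \<otimes> t\<^sup>p\<^sup>n\<close> acted on by \<open>D\<^sup>\<alpha>\<^sup>1 \<otimes> \<dots> \<otimes> D\<^sup>\<alpha>\<^sup>n\<close>.\<close>
fun Dcoeffs :: "int list \<Rightarrow> nat list \<Rightarrow> 'k::field_char_0" where
  "Dcoeffs (p # ps) (a # as) = Dcoeff (of_int p) a * Dcoeffs ps as"
| "Dcoeffs _ _ = 1"

lemma Dcoeffs_append:
  "length as1 = length ps1 \<Longrightarrow> Dcoeffs (ps1 @ ps2) (as1 @ as2) = (Dcoeffs ps1 as1 * Dcoeffs ps2 as2 :: 'k::field_char_0)"
proof (induct ps1 arbitrary: as1)
  case (Cons p ps1)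
  then show ?case by (cases as1) auto
qed simp

lemma Dcoeff_add: "Dcoeff x (a + j) = Dcoeff x a * ((-1) ^ j * fact j * ((x - of_nat a) gchoose j))"
proof -
  have "(fact (a + j) :: 'a) = fact a * fact j * of_nat ((a + j) choose a)"
    using binomial_fact_lemma[of a "a + j"] by (metis add_diff_cancel_left' le_add1 of_nat_fact of_nat_mult)
  then have "fact (a + j) * (x gchoose (a + j))
      = fact a * fact j * ((x gchoose (a + j)) * (of_nat (a + j) gchoose a))"
    by (simp add: binomial_gbinomial mult_ac)
  also have "\<dots> = fact a * fact j * (x gchoose a) * ((x - of_nat a) gchoose j)"
    using gbinomial_trinomial_revision[of a "a + j" x] by (simp add: mult_ac)
  finally show ?thesis
    by (simp add: Dcoeff_def power_add mult_ac)
qed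

lemma Dcoeffs_map2_plus:
  "length \<alpha> = length ps \<Longrightarrow> length j = length ps \<Longrightarrow>
   Dcoeffs ps (map2 (+) \<alpha> j) = (Dcoeffs ps \<alpha> :: 'k::field_char_0) * ((-1) ^ sum_list j * prod_list (map fact j)
      * prod_list (map2 (gchoose) (map2 (\<lambda>p a. of_int p - of_nat a) ps \<alpha>) j))"
proof (induct ps arbitrary: \<alpha> j)
  case (Cons p ps)
  then obtain a as x xs where "\<alpha> = a # as" "j = x # xs"
    by (cases \<alpha>; cases j) auto
  with Cons show ?case
    by (simp add: Dcoeff_add power_add mult_ac)
qed simp

lemma sum_list_map2_of_int_minus:
  "length \<alpha> = length ps \<Longrightarrow>
   sum_list (map2 (\<lambda>p a. of_int p - of_nat a) ps \<alpha>) = (of_int (sum_list ps - int (sum_list \<alpha>)) :: 'k::ring_1)"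
proof (induct ps arbitrary: \<alpha>)
  case (Cons p ps)
  then show ?case by (cases \<alpha>) auto
qed simp

text \<open>This matches the coproduct of \<open>(-D)\<^sup>s/s!\<close> in the expanded pseudoproduct with the factor
  \<open>(n choose s)\<close> in the product of the coefficient algebra.\<close>
lemma Dcoeffs_Vandermonde:
  assumes "length \<alpha> = length ps"
  shows "(\<Sum>j\<in>weak_comps (length ps) s. Dcoeffs ps (map2 (+) \<alpha> j) * ((-1) ^ s / prod_list (map fact j)))
     = (Dcoeffs ps \<alpha> :: 'k::field_char_0) * (of_int (sum_list ps - int (sum_list \<alpha>)) gchoose s)"
proof -
  let ?qs = "map2 (\<lambda>p a. of_int p - of_nat a) ps \<alpha> :: 'k list"
  have "(\<Sum>j\<in>weak_comps (length ps) s. Dcoeffs ps (map2 (+) \<alpha> j) * ((-1) ^ s / prod_list (map fact j)))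
      = (\<Sum>j\<in>weak_comps (length ps) s. Dcoeffs ps \<alpha> * prod_list (map2 (gchoose) ?qs j))"
  proof (rule sum.cong)
    fix j assume "j \<in> weak_comps (length ps) s"
    then have j: "length j = length ps" "sum_list j = s" by (auto simp: weak_comps_def)
    have "prod_list (map fact j) \<noteq> (0::'k)"
      by (auto simp: prod_list_zero_iff)
    moreover have "((-1::'k) ^ s) * (-1) ^ s = 1"
      by (simp add: power_mult_distrib[symmetric])
    ultimately show "Dcoeffs ps (map2 (+) \<alpha> j) * ((-1) ^ s / prod_list (map fact j))
        = Dcoeffs ps \<alpha> * prod_list (map2 (gchoose) ?qs j)"
      by (simp add: Dcoeffs_map2_plus[OF assms j(1)] j(2) field_simps)
  qed simp
  also have "\<dots> = Dcoeffs ps \<alpha> * (sum_list ?qs gchoose s)"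
    using gchoose_Vandermonde_list[of ?qs s] assms by (simp add: sum_distrib_left[symmetric])
  finally show ?thesis
    unfolding sum_list_map2_of_int_minus[OF assms] .
qed

definition Dmon :: "nat list \<Rightarrow> 'c::zero \<Rightarrow> nat list \<Rightarrow> 'c" where
  "Dmon \<alpha> c = (\<lambda>\<beta>. if \<beta> = \<alpha> then c else 0)"

definition fin_tens :: "nat \<Rightarrow> (nat list \<Rightarrow> 'c::zero) \<Rightarrow> bool" where
  "fin_tens n A \<longleftrightarrow> finite {\<alpha>. A \<alpha> \<noteq> 0} \<and> (\<forall>\<alpha>. A \<alpha> \<noteq> 0 \<longrightarrow> length \<alpha> = n)"

lemma tens_decomp:
  assumes "finite {\<alpha>. A \<alpha> \<noteq> 0}"
  shows "A = (\<Sum>\<alpha>\<in>{\<alpha>. A \<alpha> \<noteq> 0}. Dmon \<alpha> (A \<alpha>))"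
proof
  fix \<beta>
  show "A \<beta> = (\<Sum>\<alpha>\<in>{\<alpha>. A \<alpha> \<noteq> 0}. Dmon \<alpha> (A \<alpha>)) \<beta>"
    using assms by (simp add: sum_fun_apply Dmon_def sum.delta)
qed

lemma fin_tens_Dmon: "length \<alpha> = n \<Longrightarrow> fin_tens n (Dmon \<alpha> c)"
  unfolding fin_tens_def Dmon_def by (rule conjI, rule finite_subset[of _ "{\<alpha>}"]) auto

lemma fin_tens_sum: "finite I \<Longrightarrow> (\<And>i. i \<in> I \<Longrightarrow> fin_tens n (A i)) \<Longrightarrow> fin_tens n (\<Sum>i\<in>I. A i)"
proof (induct I rule: finite_induct)
  case (insert x F)
  then have "fin_tens n (A x)" "fin_tens n (\<Sum>i\<in>F. A i)" by auto
  moreover have "{\<alpha>. (A x + (\<Sum>i\<in>F. A i)) \<alpha> \<noteq> 0} \<subseteq> {\<alpha>. A x \<alpha> \<noteq> 0} \<union> {\<alpha>. (\<Sum>i\<in>F. A i) \<alpha> \<noteq> 0}"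
    by auto
  ultimately have "fin_tens n (A x + (\<Sum>i\<in>F. A i))"
    unfolding fin_tens_def by (auto intro: finite_subset)
  then show ?case
    by (simp only: sum.insert[OF insert(1,2)])
qed (simp add: fin_tens_def)

lemma finite_below: "finite {\<alpha>. length \<alpha> = n \<and> list_all2 (\<le>) \<alpha> (t::nat list)}"
proof (rule finite_subset)
  show "{\<alpha>. length \<alpha> = n \<and> list_all2 (\<le>) \<alpha> t} \<subseteq> {xs. set xs \<subseteq> {..sum_list t} \<and> length xs = n}"
    by (auto simp: list_all2_conv_all_nth in_set_conv_nth)
      (meson elem_le_sum_list order_trans)
qed (simp add: finite_lists_length_eq)

context conf_alg
begin

text \<open>The image of \<open>(h\<^sub>1 \<otimes> \<dots> \<otimes> h\<^sub>n) \<otimes> c\<close> under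
  \<open>(t\<^sup>p\<^sup>1 h\<^sub>1) \<cdots> (t\<^sup>p\<^sup>n h\<^sub>n) \<otimes> c\<close>, before passing to \<open>Coeff C\<close>.\<close>
definition eval_tens :: "int list \<Rightarrow> (nat list \<Rightarrow> 'c) \<Rightarrow> int \<Rightarrow> 'c" where
  "eval_tens ps A = (\<Sum>\<alpha>\<in>{\<alpha>. length \<alpha> = length ps \<and> A \<alpha> \<noteq> 0}.
      lmon (sum_list ps - int (sum_list \<alpha>)) (sc (Dcoeffs ps \<alpha>) (A \<alpha>)))"

lemma eval_tens_superset:
  assumes "finite S" "S \<subseteq> {\<alpha>. length \<alpha> = length ps}" "{\<alpha>. length \<alpha> = length ps \<and> A \<alpha> \<noteq> 0} \<subseteq> S"
  shows "eval_tens ps A = (\<Sum>\<alpha>\<in>S. lmon (sum_list ps - int (sum_list \<alpha>)) (sc (Dcoeffs ps \<alpha>) (A \<alpha>)))"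
  unfolding eval_tens_def using assms by (intro sum.mono_neutral_left) auto

lemma fin_supp_eval_tens: "fin_supp (eval_tens ps A)"
  unfolding eval_tens_def by (intro fin_supp_sum) simp

lemma eval_tens_Dmon: "length \<alpha> = length ps \<Longrightarrow>
   eval_tens ps (Dmon \<alpha> c) = lmon (sum_list ps - int (sum_list \<alpha>)) (sc (Dcoeffs ps \<alpha>) c)"
  by (subst eval_tens_superset[of "{\<alpha>}"]) (auto simp: Dmon_def)

lemma eval_tens_sum:
  assumes "finite I" "\<And>i. i \<in> I \<Longrightarrow> fin_tens (length ps) (A i)"
  shows "eval_tens ps (\<Sum>i\<in>I. A i) = (\<Sum>i\<in>I. eval_tens ps (A i))"
proof -
  let ?S = "\<Union>i\<in>I. {\<alpha>. A i \<alpha> \<noteq> 0}"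
  let ?f = "\<lambda>\<alpha> x. lmon (sum_list ps - int (sum_list \<alpha>)) (sc (Dcoeffs ps \<alpha>) x)"
  have S: "finite ?S" "?S \<subseteq> {\<alpha>. length \<alpha> = length ps}"
    using assms by (auto simp: fin_tens_def)
  have "{\<alpha>. length \<alpha> = length ps \<and> (\<Sum>i\<in>I. A i) \<alpha> \<noteq> 0} \<subseteq> ?S"
    by (auto simp: sum_fun_apply elim: sum.not_neutral_contains_not_neutral)
  then have "eval_tens ps (\<Sum>i\<in>I. A i) = (\<Sum>\<alpha>\<in>?S. \<Sum>i\<in>I. ?f \<alpha> (A i \<alpha>))"
    by (simp add: eval_tens_superset[OF S] sum_fun_apply V.scale_sum_right lmon_sum)
  also have "\<dots> = (\<Sum>i\<in>I. \<Sum>\<alpha>\<in>?S. ?f \<alpha> (A i \<alpha>))"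
    by (rule sum.swap)
  also have "\<dots> = (\<Sum>i\<in>I. eval_tens ps (A i))"
    by (intro sum.cong refl eval_tens_superset[OF S, symmetric]) auto
  finally show ?thesis .
qed

lemma eval_tens_decomp:
  assumes "fin_tens (length ps) A"
  shows "eval_tens ps A = (\<Sum>\<alpha>\<in>{\<alpha>. A \<alpha> \<noteq> 0}. eval_tens ps (Dmon \<alpha> (A \<alpha>)))"
proof -
  have fin: "finite {\<alpha>. A \<alpha> \<noteq> 0}"
    using assms by (simp add: fin_tens_def)
  have "eval_tens ps A = eval_tens ps (\<Sum>\<alpha>\<in>{\<alpha>. A \<alpha> \<noteq> 0}. Dmon \<alpha> (A \<alpha>))"
    by (subst tens_decomp[OF fin]) (rule refl)
  also have "\<dots> = (\<Sum>\<alpha>\<in>{\<alpha>. A \<alpha> \<noteq> 0}. eval_tens ps (Dmon \<alpha> (A \<alpha>)))"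
    using assms by (intro eval_tens_sum fin fin_tens_Dmon) (simp add: fin_tens_def)
  finally show ?thesis .
qed

end

section \<open>Evaluation turns pseudoproducts into products\<close>

lemma sum_list_map2_plus:
  "length \<alpha> = length j \<Longrightarrow> sum_list (map2 (+) \<alpha> j) = sum_list \<alpha> + (sum_list j :: nat)"
proof (induct \<alpha> arbitrary: j)
  case (Cons a as)
  then show ?case by (cases j) auto
qed simp

lemma map2_minus_map2_plus: "length \<alpha> = length j \<Longrightarrow> map2 (-) (map2 (+) \<alpha> j) \<alpha> = (j::nat list)"
  by (auto simp: list_eq_iff_nth_eq)

lemma map2_plus_map2_minus: "list_all2 (\<le>) \<alpha> t \<Longrightarrow> map2 (+) \<alpha> (map2 (-) t \<alpha>) = (t::nat list)"
  by (auto simp: list_all2_conv_all_nth list_eq_iff_nth_eq)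

lemma list_all2_le_map2_plus: "length \<alpha> = length j \<Longrightarrow> list_all2 (\<le>) \<alpha> (map2 (+) \<alpha> (j::nat list))"
  by (auto simp: list_all2_conv_all_nth)

lemma inj_on_map2_plus_append:
  fixes \<alpha> :: "nat list"
  assumes "length \<alpha> = n"
  shows "inj_on (\<lambda>j. map2 (+) \<alpha> j @ \<beta>) {j. length j = n}"
proof (rule inj_onI)
  fix j1 j2 assume "j1 \<in> {j. length j = n}" "j2 \<in> {j. length j = n}"
    "map2 (+) \<alpha> j1 @ \<beta> = map2 (+) \<alpha> j2 @ \<beta>"
  then have "map2 (+) \<alpha> j1 = map2 (+) \<alpha> j2" "length j1 = n" "length j2 = n"
    by auto
  then show "j1 = j2"
    using assms map2_minus_map2_plus by metis
qed

lemma sum_list_less_eq_Union: "{j. length j = n \<and> sum_list j < N} = (\<Union>s\<in>{..<N}. weak_comps n s)"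
  by (auto simp: weak_comps_def)

lemma finite_sum_list_less: "finite {j. length j = n \<and> sum_list j < (N::nat)}"
  by (simp add: sum_list_less_eq_Union)

lemma sum_sum_list_less:
  "(\<Sum>j\<in>{j. length j = n \<and> sum_list j < N}. f j) = (\<Sum>s<N. \<Sum>j\<in>weak_comps n s. f j)"
  unfolding sum_list_less_eq_Union by (rule sum.UNION_disjoint) (simp, simp, auto simp: weak_comps_def)

context conf_alg
begin

lemma pseudoprod_sum_left:
  "pseudoprod sc pr n m (\<Sum>i\<in>I. A i) B = (\<Sum>i\<in>I. pseudoprod sc pr n m (A i) B)"
proof
  fix \<gamma>
  show "pseudoprod sc pr n m (\<Sum>i\<in>I. A i) B \<gamma> = (\<Sum>i\<in>I. pseudoprod sc pr n m (A i) B) \<gamma>"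
    unfolding pseudoprod_def Let_def sum_fun_apply
    by (simp add: pr_sum_left V.scale_sum_right sum_fun_apply) (rule impI, rule sum.swap)
qed

lemma pseudoprod_sum_right:
  "pseudoprod sc pr n m A (\<Sum>i\<in>I. B i) = (\<Sum>i\<in>I. pseudoprod sc pr n m A (B i))"
proof
  fix \<gamma>
  show "pseudoprod sc pr n m A (\<Sum>i\<in>I. B i) \<gamma> = (\<Sum>i\<in>I. pseudoprod sc pr n m A (B i)) \<gamma>"
    unfolding pseudoprod_def Let_def sum_fun_apply
    by (simp add: pr_sum_right V.scale_sum_right sum_fun_apply) (rule impI, rule sum.swap)
qed

lemma pseudoprod_Dmon:
  "pseudoprod sc pr n m (Dmon \<alpha> a) (Dmon \<beta> b) \<gamma> =
    (if length \<gamma> = n + m \<and> length \<alpha> = n \<and> list_all2 (\<le>) \<alpha> (take n \<gamma>) \<and> drop n \<gamma> = \<beta>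
     then sc ((-1) ^ sum_list (map2 (-) (take n \<gamma>) \<alpha>) / prod_list (map fact (map2 (-) (take n \<gamma>) \<alpha>)))
          (pr (sum_list (map2 (-) (take n \<gamma>) \<alpha>)) a b) else 0)"
proof (cases "length \<gamma> = n + m")
  case True
  then show ?thesis
    unfolding pseudoprod_def Let_def
    by (simp add: Dmon_def if_distrib[of "\<lambda>x. pr _ x _"] if_distrib[of "\<lambda>x. sc _ x"]
        sum.delta[OF finite_below] cong: if_cong)
qed (simp add: pseudoprod_def)

lemma pseudoprod_Dmon_shift:
  assumes "length \<alpha> = n" "length j = n"
  shows "pseudoprod sc pr n m (Dmon \<alpha> a) (Dmon \<beta> b) (map2 (+) \<alpha> j @ \<beta>)
    = (if length \<beta> = m then sc ((-1) ^ sum_list j / prod_list (map fact j)) (pr (sum_list j) a b) else 0)"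
  using assms by (simp add: pseudoprod_Dmon map2_minus_map2_plus list_all2_le_map2_plus del: map_map)

lemma pseudoprod_Dmon_supp:
  assumes N: "\<forall>s\<ge>N. pr s a b = 0" and "length \<alpha> = n"
  shows "{\<gamma>. pseudoprod sc pr n m (Dmon \<alpha> a) (Dmon \<beta> b) \<gamma> \<noteq> 0}
    \<subseteq> (\<lambda>j. map2 (+) \<alpha> j @ \<beta>) ` {j. length j = n \<and> sum_list j < N}"
proof
  fix \<gamma> assume "\<gamma> \<in> {\<gamma>. pseudoprod sc pr n m (Dmon \<alpha> a) (Dmon \<beta> b) \<gamma> \<noteq> 0}"
  then have h: "length \<gamma> = n + m" "list_all2 (\<le>) \<alpha> (take n \<gamma>)" "drop n \<gamma> = \<beta>"
      "pr (sum_list (map2 (-) (take n \<gamma>) \<alpha>)) a b \<noteq> 0"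
    unfolding pseudoprod_Dmon by (auto split: if_splits)
  let ?j = "map2 (-) (take n \<gamma>) \<alpha>"
  have "sum_list ?j < N" "length ?j = n"
    using N h assms by (auto simp: not_le[symmetric])
  moreover have "map2 (+) \<alpha> ?j @ \<beta> = \<gamma>"
    using map2_plus_map2_minus[OF h(2)] h(3) by (metis append_take_drop_id)
  ultimately show "\<gamma> \<in> (\<lambda>j. map2 (+) \<alpha> j @ \<beta>) ` {j. length j = n \<and> sum_list j < N}"
    by force
qed

lemma fin_tens_pseudoprod_Dmon:
  assumes "length \<alpha> = n"
  shows "fin_tens (n + m) (pseudoprod sc pr n m (Dmon \<alpha> a) (Dmon \<beta> b))"
proof -
  obtain N where "\<forall>s\<ge>N. pr s a b = 0" using locality by blast
  from pseudoprod_Dmon_supp[OF this assms]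
  have "finite {\<gamma>. pseudoprod sc pr n m (Dmon \<alpha> a) (Dmon \<beta> b) \<gamma> \<noteq> 0}"
    by (rule finite_subset) (simp add: finite_sum_list_less)
  then show ?thesis
    unfolding fin_tens_def by (simp add: pseudoprod_Dmon)
qed

lemma eval_tens_pseudoprod_Dmon_expand:
  assumes N: "\<forall>s\<ge>N. pr s a b = 0"
    and len: "length ps = n + m" "length \<alpha> = n" "length \<beta> = m"
  defines "P \<equiv> sum_list (take n ps) - int (sum_list \<alpha>) + (sum_list (drop n ps) - int (sum_list \<beta>))"
  shows "eval_tens ps (pseudoprod sc pr n m (Dmon \<alpha> a) (Dmon \<beta> b)) =
    (\<Sum>s<N. \<Sum>j\<in>weak_comps n s. lmon (P - int s)
      (sc (Dcoeffs (take n ps) (map2 (+) \<alpha> j) * ((-1) ^ s / prod_list (map fact j)) * Dcoeffs (drop n ps) \<beta>)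
        (pr s a b)))"
proof -
  define J where "J = {j. length j = n \<and> sum_list j < N}"
  define g where "g j = map2 (+) \<alpha> j @ \<beta>" for j
  have "inj_on g J"
    using inj_on_map2_plus_append[OF len(2)] unfolding g_def J_def by (rule inj_on_subset) auto
  moreover have "g ` J \<subseteq> {\<gamma>. length \<gamma> = length ps}"
    using len by (auto simp: g_def J_def)
  moreover have "{\<gamma>. length \<gamma> = length ps \<and> pseudoprod sc pr n m (Dmon \<alpha> a) (Dmon \<beta> b) \<gamma> \<noteq> 0} \<subseteq> g ` J"
    using pseudoprod_Dmon_supp[OF N len(2)] unfolding g_def J_def by blast
  ultimately have "eval_tens ps (pseudoprod sc pr n m (Dmon \<alpha> a) (Dmon \<beta> b))
      = (\<Sum>j\<in>J. lmon (sum_list ps - int (sum_list (g j)))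
          (sc (Dcoeffs ps (g j)) (pseudoprod sc pr n m (Dmon \<alpha> a) (Dmon \<beta> b) (g j))))"
    using finite_sum_list_less[of n N] unfolding J_def[symmetric]
    by (simp only: eval_tens_superset[OF finite_imageI] sum.reindex comp_def)
  also have "\<dots> = (\<Sum>j\<in>J. lmon (P - int (sum_list j))
      (sc (Dcoeffs (take n ps) (map2 (+) \<alpha> j) * ((-1) ^ sum_list j / prod_list (map fact j))
        * Dcoeffs (drop n ps) \<beta>) (pr (sum_list j) a b)))"
  proof (rule sum.cong)
    fix j assume "j \<in> J"
    then have lj: "length j = n" by (simp add: J_def)
    have "sum_list (g j) = sum_list \<alpha> + sum_list j + sum_list \<beta>"
      using lj len by (simp add: g_def sum_list_map2_plus)
    moreover have "sum_list ps = sum_list (take n ps) + sum_list (drop n ps)"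
      by (metis append_take_drop_id sum_list_append)
    ultimately have e1: "sum_list ps - int (sum_list (g j)) = P - int (sum_list j)"
      by (simp add: P_def)
    have e2: "Dcoeffs ps (g j) = Dcoeffs (take n ps) (map2 (+) \<alpha> j) * Dcoeffs (drop n ps) \<beta>"
      unfolding g_def using lj len by (subst Dcoeffs_append[symmetric]) simp_all
    have e3: "pseudoprod sc pr n m (Dmon \<alpha> a) (Dmon \<beta> b) (g j)
        = sc ((-1) ^ sum_list j / prod_list (map fact j)) (pr (sum_list j) a b)"
      unfolding g_def using lj len by (simp add: pseudoprod_Dmon_shift)
    show "lmon (sum_list ps - int (sum_list (g j)))
          (sc (Dcoeffs ps (g j)) (pseudoprod sc pr n m (Dmon \<alpha> a) (Dmon \<beta> b) (g j)))
        = lmon (P - int (sum_list j)) (sc (Dcoeffs (take n ps) (map2 (+) \<alpha> j)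
          * ((-1) ^ sum_list j / prod_list (map fact j)) * Dcoeffs (drop n ps) \<beta>) (pr (sum_list j) a b))"
      unfolding e1 e2 e3 V.scale_scale by (simp only: mult_ac)
  qed simp
  also have "\<dots> = (\<Sum>s<N. \<Sum>j\<in>weak_comps n s. lmon (P - int s)
      (sc (Dcoeffs (take n ps) (map2 (+) \<alpha> j) * ((-1) ^ s / prod_list (map fact j)) * Dcoeffs (drop n ps) \<beta>)
        (pr s a b)))"
    unfolding J_def sum_sum_list_less by (intro sum.cong refl) (simp add: weak_comps_def)
  finally show ?thesis .
qed

lemma eval_tens_pseudoprod_Dmon:
  assumes len: "length ps = n + m" "length \<alpha> = n" "length \<beta> = m"
  shows "eval_tens ps (pseudoprod sc pr n m (Dmon \<alpha> a) (Dmon \<beta> b)) =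
     coeff_mult sc pr (eval_tens (take n ps) (Dmon \<alpha> a)) (eval_tens (drop n ps) (Dmon \<beta> b))"
proof -
  obtain N where N: "\<forall>s\<ge>N. pr s a b = 0" using locality by blast
  define P1 where "P1 = sum_list (take n ps) - int (sum_list \<alpha>)"
  define P2 where "P2 = sum_list (drop n ps) - int (sum_list \<beta>)"
  define w1 where "w1 = (Dcoeffs (take n ps) \<alpha> :: 'k)"
  define w2 where "w2 = (Dcoeffs (drop n ps) \<beta> :: 'k)"
  have "eval_tens ps (pseudoprod sc pr n m (Dmon \<alpha> a) (Dmon \<beta> b)) = (\<Sum>s<N. lmon (P1 + P2 - int s)
      (sc ((\<Sum>j\<in>weak_comps n s. Dcoeffs (take n ps) (map2 (+) \<alpha> j) * ((-1) ^ s / prod_list (map fact j))) * w2)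
        (pr s a b)))"
    unfolding eval_tens_pseudoprod_Dmon_expand[OF N len] P1_def P2_def w2_def
    by (simp add: lmon_sum[symmetric] V.scale_sum_left[symmetric] sum_distrib_right)
  also have "\<dots> = (\<Sum>s<N. lmon (P1 + P2 - int s) (sc (w1 * (of_int P1 gchoose s) * w2) (pr s a b)))"
  proof -
    have "(\<Sum>j\<in>weak_comps n s. Dcoeffs (take n ps) (map2 (+) \<alpha> j) * ((-1) ^ s / prod_list (map fact j)))
        = w1 * (of_int P1 gchoose s)" for s
      using Dcoeffs_Vandermonde[of \<alpha> "take n ps" s] len unfolding P1_def w1_def by simp
    then show ?thesis by (simp only:)
  qed
  also have "\<dots> = lmon_mult P1 (sc w1 a) P2 (sc w2 b)"
    using N by (subst lmon_mult_eq_sum[of N]) (simp_all add: pr_scale_left pr_scale_right mult_ac)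
  also have "\<dots> = coeff_mult sc pr (eval_tens (take n ps) (Dmon \<alpha> a)) (eval_tens (drop n ps) (Dmon \<beta> b))"
    using len by (simp add: eval_tens_Dmon P1_def P2_def w1_def w2_def coeff_mult_lmon)
  finally show ?thesis .
qed

lemma pseudoprod_decomp:
  assumes "fin_tens n A" "fin_tens m B"
  shows "pseudoprod sc pr n m A B = (\<Sum>\<alpha>\<in>{\<alpha>. A \<alpha> \<noteq> 0}. \<Sum>\<beta>\<in>{\<beta>. B \<beta> \<noteq> 0}.
     pseudoprod sc pr n m (Dmon \<alpha> (A \<alpha>)) (Dmon \<beta> (B \<beta>)))"
proof -
  have f: "finite {\<alpha>. A \<alpha> \<noteq> 0}" "finite {\<beta>. B \<beta> \<noteq> 0}"
    using assms by (auto simp: fin_tens_def)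
  show ?thesis
    by (subst tens_decomp[OF f(1)], subst tens_decomp[OF f(2)])
      (simp add: pseudoprod_sum_left pseudoprod_sum_right, rule sum.swap)
qed

lemma fin_tens_pseudoprod:
  assumes "fin_tens n A" "fin_tens m B"
  shows "fin_tens (n + m) (pseudoprod sc pr n m A B)"
  unfolding pseudoprod_decomp[OF assms]
  using assms by (intro fin_tens_sum fin_tens_pseudoprod_Dmon) (auto simp: fin_tens_def)

lemma eval_tens_pseudoprod:
  assumes A: "fin_tens n A" and B: "fin_tens m B" and len: "length ps = n + m"
  shows "eval_tens ps (pseudoprod sc pr n m A B)
    = coeff_mult sc pr (eval_tens (take n ps) A) (eval_tens (drop n ps) B)"
proof -
  let ?SA = "{\<alpha>. A \<alpha> \<noteq> 0}" and ?SB = "{\<beta>. B \<beta> \<noteq> 0}"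
  have fin: "finite ?SA" "finite ?SB" and lA: "\<And>\<alpha>. \<alpha> \<in> ?SA \<Longrightarrow> length \<alpha> = n"
    and lB: "\<And>\<beta>. \<beta> \<in> ?SB \<Longrightarrow> length \<beta> = m"
    using A B by (auto simp: fin_tens_def)
  have fin_tens_PP: "fin_tens (length ps) (pseudoprod sc pr n m (Dmon \<alpha> (A \<alpha>)) (Dmon \<beta> (B \<beta>)))"
    if "\<alpha> \<in> ?SA" for \<alpha> \<beta>
    unfolding len using lA[OF that] by (rule fin_tens_pseudoprod_Dmon)
  have "eval_tens ps (pseudoprod sc pr n m A B) = (\<Sum>\<alpha>\<in>?SA. \<Sum>\<beta>\<in>?SB.
      eval_tens ps (pseudoprod sc pr n m (Dmon \<alpha> (A \<alpha>)) (Dmon \<beta> (B \<beta>))))"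
    unfolding pseudoprod_decomp[OF A B] using fin fin_tens_PP
    by (subst eval_tens_sum) (auto intro!: fin_tens_sum sum.cong eval_tens_sum)
  also have "\<dots> = (\<Sum>\<alpha>\<in>?SA. \<Sum>\<beta>\<in>?SB.
      coeff_mult sc pr (eval_tens (take n ps) (Dmon \<alpha> (A \<alpha>))) (eval_tens (drop n ps) (Dmon \<beta> (B \<beta>))))"
    using lA lB len by (intro sum.cong refl eval_tens_pseudoprod_Dmon) auto
  also have "\<dots> = (\<Sum>\<alpha>\<in>?SA. coeff_mult sc pr (eval_tens (take n ps) (Dmon \<alpha> (A \<alpha>)))
      (\<Sum>\<beta>\<in>?SB. eval_tens (drop n ps) (Dmon \<beta> (B \<beta>))))"
    by (intro sum.cong refl coeff_mult_sum_right[symmetric] fin_supp_eval_tens)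
  also have "\<dots> = coeff_mult sc pr (\<Sum>\<alpha>\<in>?SA. eval_tens (take n ps) (Dmon \<alpha> (A \<alpha>)))
      (\<Sum>\<beta>\<in>?SB. eval_tens (drop n ps) (Dmon \<beta> (B \<beta>)))"
    by (intro coeff_mult_sum_left[symmetric] fin_supp_eval_tens fin_supp_sum)
  also have "\<dots> = coeff_mult sc pr (eval_tens (take n ps) A) (eval_tens (drop n ps) B)"
    using A B len by (simp add: eval_tens_decomp)
  finally show ?thesis .
qed

lemma tens1_eq_Dmon: "tens1 b = Dmon [0] b"
  by (simp add: tens1_def Dmon_def)

lemma fin_tens_tstar: "length bs = leaves tr \<Longrightarrow> fin_tens (leaves tr) (tstar sc pr tr bs)"
proof (induct tr arbitrary: bs)
  case Leaf
  then show ?case by (auto simp: length_Suc_conv tens1_eq_Dmon fin_tens_Dmon)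
next
  case (Node l r)
  then show ?case by (simp, intro fin_tens_pseudoprod Node.hyps) simp_all
qed

lemma eval_tens_tstar:
  "length bs = leaves tr \<Longrightarrow> length ps = leaves tr \<Longrightarrow>
    eval_tens ps (tstar sc pr tr bs) \<approx> tmon sc pr tr (map2 lmon ps bs)"
proof (induct tr arbitrary: bs ps)
  case Leaf
  then obtain b p where "bs = [b]" "ps = [p]"
    by (cases bs; cases ps) (auto simp: length_Suc_conv)
  then show ?case
    by (simp add: tens1_eq_Dmon eval_tens_Dmon)
next
  case (Node l r)
  let ?n = "leaves l"
  have "eval_tens ps (tstar sc pr (Node l r) bs) = coeff_mult sc pr
      (eval_tens (take ?n ps) (tstar sc pr l (take ?n bs))) (eval_tens (drop ?n ps) (tstar sc pr r (drop ?n bs)))"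
    using Node.prems by (simp, intro eval_tens_pseudoprod fin_tens_tstar) simp_all
  also have "\<dots> \<approx> coeff_mult sc pr (tmon sc pr l (map2 lmon (take ?n ps) (take ?n bs)))
      (tmon sc pr r (map2 lmon (drop ?n ps) (drop ?n bs)))"
    using Node.prems by (intro coeff_mult_ceq Node.hyps fin_supp_tmon) auto
  also have "\<dots> = tmon sc pr (Node l r) (map2 lmon ps bs)"
    by (simp add: take_map drop_map take_zip drop_zip)
  finally show ?case .
qed

end

lemma perm_tens_eq: "perm_tens \<sigma> A = (\<lambda>\<beta>. A (permute_list \<sigma> \<beta>))"
  by (simp add: perm_tens_def permute_list_def)

lemma permute_list_inv_cancel:
  assumes "\<sigma> permutes {..<length xs}"
  shows "permute_list \<sigma> (permute_list (inv \<sigma>) xs) = xs"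
    and "permute_list (inv \<sigma>) (permute_list \<sigma> xs) = xs"
  using permute_list_compose[OF assms, of "inv \<sigma>"]
    permute_list_compose[OF permutes_inv[OF assms], of \<sigma>]
  by (simp_all add: permutes_inv_o[OF assms])

lemma sum_list_permute_list:
  "\<sigma> permutes {..<length xs} \<Longrightarrow> sum_list (permute_list \<sigma> xs) = (sum_list xs :: 'a::comm_monoid_add)"
  by (simp only: sum_mset_sum_list[symmetric] mset_permute_list)

lemma Dcoeffs_eq_prod_list: "Dcoeffs ps \<alpha> = prod_list (map2 (\<lambda>p a. Dcoeff (of_int p) a) ps \<alpha>)"
  by (induct ps \<alpha> rule: Dcoeffs.induct) auto

lemma Dcoeffs_permute_list:
  assumes "\<sigma> permutes {..<length ps}" "length \<alpha> = length ps"
  shows "Dcoeffs (permute_list \<sigma> ps) (permute_list \<sigma> \<alpha>) = (Dcoeffs ps \<alpha> :: 'k::field_char_0)"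
proof -
  have "\<sigma> permutes {..<length (zip ps \<alpha>)}"
    using assms by simp
  then show ?thesis
    unfolding Dcoeffs_eq_prod_list permute_list_zip[OF assms(1) refl assms(2)[symmetric], symmetric]
    by (simp only: prod_mset_prod_list[symmetric] mset_map mset_permute_list)
qed

lemma permutes_inv_last:
  assumes "\<sigma> permutes {..<Suc m}"
  shows "inv \<sigma> m < Suc m" "\<sigma> (inv \<sigma> m) = m"
  using permutes_in_image[OF permutes_inv[OF assms]] permutes_inverses(1)[OF assms] by auto

lemma permutes_other_less_last:
  assumes "\<sigma> permutes {..<Suc m}" "i < Suc m" "i \<noteq> inv \<sigma> m"
  shows "\<sigma> i < m"
proof -
  have "\<sigma> i \<noteq> m"
    using assms permutes_inverses(2)[OF assms(1), of i] by auto
  moreover have "\<sigma> i < Suc m"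
    using assms permutes_in_image[OF assms(1)] by simp
  ultimately show ?thesis by simp
qed

context conf_alg
begin

lemma fin_tens_perm_tens:
  assumes "\<sigma> permutes {..<n}" "fin_tens n A"
  shows "fin_tens n (perm_tens \<sigma> A)"
proof -
  have "{\<beta>. perm_tens \<sigma> A \<beta> \<noteq> 0} \<subseteq> permute_list (inv \<sigma>) ` {\<alpha>. A \<alpha> \<noteq> 0}"
  proof
    fix \<beta> assume "\<beta> \<in> {\<beta>. perm_tens \<sigma> A \<beta> \<noteq> 0}"
    then have "A (permute_list \<sigma> \<beta>) \<noteq> 0" "length \<beta> = n"
      using assms(2) by (auto simp: perm_tens_eq fin_tens_def)
    then show "\<beta> \<in> permute_list (inv \<sigma>) ` {\<alpha>. A \<alpha> \<noteq> 0}"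
      using permute_list_inv_cancel(2)[of \<sigma> \<beta>] assms(1) by force
  qed
  then show ?thesis
    using assms(2) by (auto simp: fin_tens_def perm_tens_eq intro: finite_subset)
qed

lemma eval_tens_perm_tens:
  assumes "\<sigma> permutes {..<length ps}"
  shows "eval_tens ps (perm_tens \<sigma> A) = eval_tens (permute_list \<sigma> ps) A"
  unfolding eval_tens_def perm_tens_eq length_permute_list
proof (rule sum.reindex_bij_witness[of _ "permute_list (inv \<sigma>)" "permute_list \<sigma>"])
  fix \<beta> assume "\<beta> \<in> {\<alpha>. length \<alpha> = length ps \<and> A (permute_list \<sigma> \<alpha>) \<noteq> 0}"
  then have \<beta>: "\<sigma> permutes {..<length \<beta>}" "length \<beta> = length ps" "A (permute_list \<sigma> \<beta>) \<noteq> 0"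
    using assms by auto
  show "permute_list (inv \<sigma>) (permute_list \<sigma> \<beta>) = \<beta>"
    using \<beta>(1) by (rule permute_list_inv_cancel)
  show "permute_list \<sigma> \<beta> \<in> {\<alpha>. length \<alpha> = length ps \<and> A \<alpha> \<noteq> 0}"
    using \<beta> by simp
  show "lmon (sum_list (permute_list \<sigma> ps) - int (sum_list (permute_list \<sigma> \<beta>)))
        (sc (Dcoeffs (permute_list \<sigma> ps) (permute_list \<sigma> \<beta>)) (A (permute_list \<sigma> \<beta>)))
      = lmon (sum_list ps - int (sum_list \<beta>)) (sc (Dcoeffs ps \<beta>) (A (permute_list \<sigma> \<beta>)))"
    using assms \<beta> by (simp add: sum_list_permute_list Dcoeffs_permute_list)
next
  fix \<alpha> assume "\<alpha> \<in> {\<alpha>. length \<alpha> = length ps \<and> A \<alpha> \<noteq> 0}"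
  then have \<alpha>: "\<sigma> permutes {..<length \<alpha>}" "length \<alpha> = length ps" "A \<alpha> \<noteq> 0"
    using assms by auto
  show "permute_list \<sigma> (permute_list (inv \<sigma>) \<alpha>) = \<alpha>"
    using \<alpha>(1) by (rule permute_list_inv_cancel)
  then show "permute_list (inv \<sigma>) \<alpha> \<in> {\<alpha>. length \<alpha> = length ps \<and> A (permute_list \<sigma> \<alpha>) \<noteq> 0}"
    using \<alpha> by simp
qed

end

section \<open>Alternating binomial sums\<close>

lemma sum_binomial_Suc_split:
  "(\<Sum>j\<le>Suc L. of_nat (Suc L choose j) * g j) =
   (\<Sum>j\<le>L. of_nat (L choose j) * g j) + (\<Sum>j\<le>L. of_nat (L choose j) * (g (Suc j) :: 'a::comm_ring_1))"
proof -
  have "(\<Sum>j\<le>Suc L. of_nat (Suc L choose j) * g j)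
      = g 0 + (\<Sum>j\<le>L. of_nat (L choose Suc j) * g (Suc j)) + (\<Sum>j\<le>L. of_nat (L choose j) * g (Suc j))"
    unfolding sum.atMost_Suc_shift by (simp add: sum.distrib algebra_simps)
  also have "g 0 + (\<Sum>j\<le>L. of_nat (L choose Suc j) * g (Suc j)) = (\<Sum>j\<le>Suc L. of_nat (L choose j) * g j)"
    unfolding sum.atMost_Suc_shift by simp
  also have "\<dots> = (\<Sum>j\<le>L. of_nat (L choose j) * g j)"
    by (simp add: sum.atMost_Suc binomial_eq_0)
  finally show ?thesis .
qed

lemma gchoose_finite_difference:
  "(\<Sum>j\<le>L. of_nat (L choose j) * ((-1) ^ j * ((x + of_nat j) gchoose k))) =
   (if L \<le> k then (-1) ^ L * (x gchoose (k - L)) else (0::'k::field_char_0))"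
proof (induct L arbitrary: x)
  case (Suc L)
  have "(\<Sum>j\<le>Suc L. of_nat (Suc L choose j) * ((-1) ^ j * ((x + of_nat j) gchoose k)))
     = (\<Sum>j\<le>L. of_nat (L choose j) * ((-1) ^ j * ((x + of_nat j) gchoose k)))
       - (\<Sum>j\<le>L. of_nat (L choose j) * ((-1) ^ j * (((x + 1) + of_nat j) gchoose k)))"
    unfolding sum_binomial_Suc_split by (simp add: sum_negf[symmetric] add_ac)
  also have "\<dots> = (if L \<le> k then (-1) ^ L * (x gchoose (k - L)) else 0)
      - (if L \<le> k then (-1) ^ L * ((x + 1) gchoose (k - L)) else 0)"
    by (simp only: Suc)
  also have "\<dots> = (if Suc L \<le> k then (-1) ^ Suc L * (x gchoose (k - Suc L)) else 0)"
  proof (cases "Suc L \<le> k")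
    case True
    then obtain t where t: "k - L = Suc t" "k - Suc L = t"
      by (metis Suc_diff_Suc Suc_le_lessD diff_Suc_1)
    then show ?thesis
      using True gbinomial_Suc_Suc[of x t] by (simp add: algebra_simps)
  qed (cases "L = k"; simp)
  finally show ?case .
qed simp

lemma binomial_mult_swap:
  assumes "j \<le> K"
  shows "(K choose j) * ((K - j) choose a) = (K choose a) * ((K - a) choose j)"
proof (cases "a + j \<le> K")
  case True
  then have "(K choose (K - j)) * ((K - j) choose a) = (K choose a) * ((K - a) choose (K - j - a))"
    by (intro choose_mult) auto
  moreover have "K choose (K - j) = K choose j" "(K - a) choose (K - j - a) = (K - a) choose j"
    using True assms binomial_symmetric[of j K] binomial_symmetric[of j "K - a"] by (simp_all add: add.commute)
  ultimately show ?thesis by simp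
qed (use assms in \<open>auto simp: binomial_eq_0\<close>)

lemma Dcoeff_of_nat: "Dcoeff (of_nat K) a = (-1) ^ a * fact a * of_nat (K choose a)"
  by (simp add: Dcoeff_def binomial_gbinomial)

lemma binomial_Dcoeff_swap:
  assumes "a \<le> K" "j \<le> K"
  shows "of_nat (K choose j) * Dcoeff (of_nat (K - j)) a
    = (-1) ^ a * (fact K / fact (K - a)) * (of_nat ((K - a) choose j) :: 'k::field_char_0)"
proof -
  have "(fact a * fact (K - a) * of_nat (K choose a) :: 'k) = fact K"
    using arg_cong[OF binomial_fact_lemma[OF assms(1)], of "of_nat :: nat \<Rightarrow> 'k"]
    by (simp only: of_nat_mult of_nat_fact)
  then have fK: "fact a * of_nat (K choose a) = (fact K / fact (K - a) :: 'k)"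
    by (simp add: field_simps)
  have "of_nat (K choose j) * Dcoeff (of_nat (K - j)) a
      = (-1) ^ a * fact a * (of_nat ((K choose j) * ((K - j) choose a)) :: 'k)"
    unfolding Dcoeff_of_nat of_nat_mult by (simp only: mult_ac)
  also have "\<dots> = (-1) ^ a * (fact a * of_nat (K choose a)) * of_nat ((K - a) choose j)"
    unfolding binomial_mult_swap[OF assms(2)] of_nat_mult by (simp only: mult_ac)
  finally show ?thesis
    unfolding fK .
qed

lemma sum_binomial_Dcoeff:
  "(\<Sum>j\<le>K. of_nat (K choose j) * (-1) ^ j * Dcoeff (of_nat (K - j)) a * Dcoeff (x + of_nat j) k)
   = (if a \<le> K \<and> K - a \<le> k then (-1) ^ a * (fact K / fact (K - a)) * (fact k / fact (k - (K - a)))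
        * Dcoeff x (k - (K - a)) else (0::'k::field_char_0))"
proof (cases "a \<le> K")
  case True
  define L where "L = K - a"
  define C where "C = (-1) ^ a * (fact K / fact L) * ((-1) ^ k * fact k :: 'k)"
  have swap: "of_nat (K choose j) * Dcoeff (of_nat (K - j)) a
      = (-1) ^ a * (fact K / fact L) * (of_nat (L choose j) :: 'k)" if "j \<le> K" for j
    unfolding L_def using True that by (rule binomial_Dcoeff_swap)
  have "(\<Sum>j\<le>K. of_nat (K choose j) * (-1) ^ j * Dcoeff (of_nat (K - j)) a * Dcoeff (x + of_nat j) k)
     = (\<Sum>j\<le>K. C * (of_nat (L choose j) * ((-1) ^ j * ((x + of_nat j) gchoose k))))"
  proof (rule sum.cong)
    fix j assume "j \<in> {..K}"
    then have "of_nat (K choose j) * (-1) ^ j * Dcoeff (of_nat (K - j)) a * Dcoeff (x + of_nat j) k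
        = (of_nat (K choose j) * Dcoeff (of_nat (K - j)) a) * ((-1) ^ j * Dcoeff (x + of_nat j) k)"
      by (simp only: mult_ac)
    also have "\<dots> = (-1) ^ a * (fact K / fact L) * of_nat (L choose j) * ((-1) ^ j * Dcoeff (x + of_nat j) k)"
      using \<open>j \<in> {..K}\<close> by (simp only: swap atMost_iff)
    finally show "of_nat (K choose j) * (-1) ^ j * Dcoeff (of_nat (K - j)) a * Dcoeff (x + of_nat j) k
        = C * (of_nat (L choose j) * ((-1) ^ j * ((x + of_nat j) gchoose k)))"
      unfolding C_def Dcoeff_def by (simp only: mult_ac)
  qed simp
  also have "\<dots> = C * (\<Sum>j\<le>L. of_nat (L choose j) * ((-1) ^ j * ((x + of_nat j) gchoose k)))"
    unfolding sum_distrib_left[symmetric]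
    by (rule arg_cong[where f = "(*) C"], rule sum.mono_neutral_right) (auto simp: L_def binomial_eq_0)
  also have "\<dots> = (if L \<le> k then C * (-1) ^ L * (x gchoose (k - L)) else 0)"
    by (simp add: gchoose_finite_difference)
  also have "\<dots> = (if L \<le> k then (-1) ^ a * (fact K / fact L) * (fact k / fact (k - L))
      * Dcoeff x (k - L) else 0)"
  proof (cases "L \<le> k")
    case True
    then obtain t where t: "k = L + t"
      using le_Suc_ex by blast
    have "(-1::'k) ^ k * (-1) ^ L = (-1) ^ t"
      unfolding t power_add by (simp add: algebra_simps power_mult_distrib[symmetric])
    moreover have "fact k = (fact k / fact t) * (fact t :: 'k)"
      by simp
    ultimately show ?thesis
      using True unfolding C_def Dcoeff_def t by (simp add: algebra_simps)
  qed simp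
  finally show ?thesis
    using True by (simp add: L_def)
next
  case False
  then have "Dcoeff (of_nat (K - j)) a = (0::'k)" for j
    by (simp add: Dcoeff_of_nat binomial_eq_0)
  then show ?thesis using False by (simp del: of_nat_diff)
qed

definition below :: "nat list \<Rightarrow> nat list set" where
  "below K = {j. length j = length K \<and> list_all2 (\<le>) j K}"

lemma below_Nil [simp]: "below [] = {[]}"
  by (auto simp: below_def)

lemma sum_below_Cons: "(\<Sum>j\<in>below (k # K). f j) = (\<Sum>x\<le>k. \<Sum>j\<in>below K. f (x # j))"
proof -
  have "below (k # K) = (\<lambda>(x, j). x # j) ` ({..k} \<times> below K)"
    by (auto simp: below_def image_iff list_all2_Cons2)
  moreover have "inj_on (\<lambda>(x, j). x # j) ({..k} \<times> below K)"
    by (auto simp: inj_on_def)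
  ultimately show ?thesis
    by (simp add: sum.reindex sum.cartesian_product split_def)
qed

definition fact_ratios :: "nat list \<Rightarrow> nat list \<Rightarrow> 'k::field_char_0" where
  "fact_ratios K A = prod_list (map2 (\<lambda>Ki Ai. (-1) ^ Ai * (fact Ki / fact (Ki - Ai))) K A)"

lemma sum_below_binomial_Dcoeffs:
  "length A = length K \<Longrightarrow>
   (\<Sum>j\<in>below K. prod_list (map2 (\<lambda>Ki ji. of_nat (Ki choose ji) * (-1) ^ ji) K j) *
        prod_list (map2 (\<lambda>d a. Dcoeff (of_nat d) a) (map2 (-) K j) A) * Dcoeff (x + of_nat (sum_list j)) k)
   = (if list_all2 (\<le>) A K \<and> sum_list (map2 (-) K A) \<le> k
      then fact_ratios K A * (fact k / fact (k - sum_list (map2 (-) K A))) * Dcoeff x (k - sum_list (map2 (-) K A))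
      else (0::'k::field_char_0))"
proof (induct K arbitrary: A x k)
  case (Cons K0 K)
  then obtain A0 A' where A: "A = A0 # A'" "length A' = length K"
    by (cases A) auto
  let ?r = "sum_list (map2 (-) K A')"
  have "(\<Sum>j\<in>below (K0 # K). prod_list (map2 (\<lambda>Ki ji. of_nat (Ki choose ji) * (-1) ^ ji) (K0 # K) j) *
        prod_list (map2 (\<lambda>d a. Dcoeff (of_nat d) a) (map2 (-) (K0 # K) j) A) * Dcoeff (x + of_nat (sum_list j)) k)
    = (\<Sum>j0\<le>K0. (of_nat (K0 choose j0) * (-1) ^ j0 * Dcoeff (of_nat (K0 - j0)) A0) *
        (\<Sum>j\<in>below K. prod_list (map2 (\<lambda>Ki ji. of_nat (Ki choose ji) * (-1) ^ ji) K j) *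
        prod_list (map2 (\<lambda>d a. Dcoeff (of_nat d) a) (map2 (-) K j) A') * Dcoeff ((x + of_nat j0) + of_nat (sum_list j)) k))"
    unfolding sum_below_Cons A(1) by (simp add: sum_distrib_left mult_ac add_ac)
  also have "\<dots> = (if list_all2 (\<le>) A' K \<and> ?r \<le> k then fact_ratios K A' * (fact k / fact (k - ?r)) *
       (\<Sum>j0\<le>K0. of_nat (K0 choose j0) * (-1) ^ j0 * Dcoeff (of_nat (K0 - j0)) A0 * Dcoeff (x + of_nat j0) (k - ?r))
     else 0)"
    unfolding Cons.hyps[OF A(2)]
    by (cases "list_all2 (\<le>) A' K \<and> ?r \<le> k") (auto simp: sum_distrib_left mult_ac)
  also have "\<dots> = (if list_all2 (\<le>) A' K \<and> ?r \<le> k then fact_ratios K A' * (fact k / fact (k - ?r)) *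
       (if A0 \<le> K0 \<and> K0 - A0 \<le> k - ?r then (-1) ^ A0 * (fact K0 / fact (K0 - A0))
          * (fact (k - ?r) / fact (k - ?r - (K0 - A0))) * Dcoeff x (k - ?r - (K0 - A0)) else 0)
     else 0)"
    by (simp only: sum_binomial_Dcoeff)
  also have "\<dots> = (if list_all2 (\<le>) A (K0 # K) \<and> sum_list (map2 (-) (K0 # K) A) \<le> k
      then fact_ratios (K0 # K) A * (fact k / fact (k - sum_list (map2 (-) (K0 # K) A)))
        * Dcoeff x (k - sum_list (map2 (-) (K0 # K) A)) else 0)"
  proof (cases "list_all2 (\<le>) A' K \<and> A0 \<le> K0 \<and> K0 - A0 + ?r \<le> k")
    case True
    then have "k - (K0 - A0 + ?r) = k - ?r - (K0 - A0)" "K0 - A0 \<le> k - ?r" "K0 + ?r - A0 \<le> k"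
      by auto
    moreover have "fact k / fact (k - ?r) * (fact (k - ?r) / fact (k - ?r - (K0 - A0)))
        = (fact k / fact (k - ?r - (K0 - A0)) :: 'k)"
      by simp
    ultimately show ?thesis
      using True by (simp add: A(1) fact_ratios_def mult_ac)
  qed (auto simp: A(1))
  finally show ?case .
qed (simp add: fact_ratios_def)

lemma prod_list_fact_sign:
  "list_all2 (\<le>) A K \<Longrightarrow>
   prod_list (map (\<lambda>Ki. fact Ki * (-1) ^ Ki) K) * ((-1) ^ sum_list (map2 (-) K A) / prod_list (map fact (map2 (-) K A)))
   = (fact_ratios K A :: 'k::field_char_0)"
proof (induct K arbitrary: A)
  case (Cons K0 K)
  then obtain A0 A' where A: "A = A0 # A'" "A0 \<le> K0" "list_all2 (\<le>) A' K"
    by (cases A) auto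
  define P where "P = (prod_list (map (\<lambda>Ki. fact Ki * (-1) ^ Ki) K) :: 'k)"
  define S where "S = sum_list (map2 (-) K A')"
  define Q where "Q = (prod_list (map fact (map2 (-) K A')) :: 'k)"
  obtain d where d: "K0 = A0 + d"
    using A(2) le_Suc_ex by blast
  have sign: "(-1::'k) ^ K0 * (-1) ^ (K0 - A0) = (-1) ^ A0"
    unfolding d by (simp add: power_add algebra_simps power_mult_distrib[symmetric])
  have "prod_list (map (\<lambda>Ki. fact Ki * (-1) ^ Ki) (K0 # K))
      * ((-1) ^ sum_list (map2 (-) (K0 # K) A) / prod_list (map fact (map2 (-) (K0 # K) A)))
      = (fact K0 * (-1) ^ K0 * P) * ((-1) ^ (K0 - A0) * (-1) ^ S / (fact (K0 - A0) * Q))"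
    unfolding P_def S_def Q_def A(1) by (simp add: power_add)
  also have "\<dots> = (fact K0 * ((-1) ^ K0 * (-1) ^ (K0 - A0)) / fact (K0 - A0)) * (P * ((-1) ^ S / Q))"
    by (simp add: mult_ac)
  also have "\<dots> = ((-1) ^ A0 * (fact K0 / fact (K0 - A0))) * fact_ratios K A'"
    unfolding sign Cons.hyps[OF A(3), folded P_def S_def Q_def] by simp
  finally show ?case
    by (simp add: A(1) fact_ratios_def)
qed (simp add: fact_ratios_def)

lemma fact_sign_theta_coeff:
  assumes "list_all2 (\<le>) A K" "sum_list (map2 (-) K A) \<le> k"
  defines "r \<equiv> sum_list (map2 (-) K A)"
  shows "prod_list (map (\<lambda>Ki. fact Ki * (-1) ^ Ki) K)
      * (of_nat (k choose r) * (-1) ^ r * fact r / prod_list (map fact (map2 (-) K A)))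
    = fact k / fact (k - r) * (fact_ratios K A :: 'k::field_char_0)"
proof -
  define PF where "PF = (prod_list (map (\<lambda>Ki. fact Ki * (-1) ^ Ki) K) :: 'k)"
  define Q where "Q = (prod_list (map fact (map2 (-) K A)) :: 'k)"
  have "PF * (of_nat (k choose r) * (-1) ^ r * fact r / Q) = (of_nat (k choose r) * fact r) * (PF * ((-1) ^ r / Q))"
    by (simp add: field_simps)
  also have "of_nat (k choose r) * fact r = (fact k / fact (k - r) :: 'k)"
    using assms(2) by (simp add: r_def binomial_fact field_simps)
  also have "PF * ((-1) ^ r / Q) = fact_ratios K A"
    unfolding PF_def Q_def r_def by (rule prod_list_fact_sign[OF assms(1)])
  finally show ?thesis
    unfolding PF_def Q_def .
qed

lemma sum_PiE_eq_sum_lists: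
  "(\<Sum>js\<in>PiE {..<m} (\<lambda>l. {..b l}). g (map js [0..<m])) = (\<Sum>j\<in>{j. length j = m \<and> (\<forall>i<m. j ! i \<le> b i)}. g j)"
  by (rule sum.reindex_bij_witness[where i = "\<lambda>j l. if l < m then j ! l else undefined" and j = "\<lambda>js. map js [0..<m]"])
    (auto simp: PiE_iff extensional_def fun_eq_iff intro!: nth_equalityI)

lemma below_map: "below (map ks [0..<m]) = {j. length j = m \<and> (\<forall>i<m. j ! i \<le> ks i)}"
  by (auto simp: below_def list_all2_conv_all_nth)

lemma prod_list_map2_upt: "prod_list (map2 f (map a [0..<m]) (map b [0..<m])) = (\<Prod>l<m. f (a l) (b l))"
  by (induct m) (simp_all add: zip_append1 prod.lessThan_Suc mult.commute)

lemma sum_list_map_upt: "sum_list (map a [0..<m]) = (\<Sum>l<m. a l)"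
  by (simp add: sum_list_sum_nth atLeast0LessThan)

lemma prod_list_map_upt: "prod_list (map f [0..<m]) = (\<Prod>l<m. f l)"
  by (induct m) (simp_all add: mult.commute)

lemma pairing_antipode: "pairing (antipode_t x) k = fact k * (-1) ^ k * coeff x k"
  by (simp add: pairing_def antipode_t_def coeff_pcompose_linear)

lemma sum_list_map2_minus_le:
  "list_all2 (\<le>) A K \<Longrightarrow> sum_list K = sum_list A + sum_list (map2 (-) K (A::nat list))"
proof (induct K arbitrary: A)
  case (Cons k K)
  then show ?case by (cases A) auto
qed simp

context conf_alg
begin

definition theta_cond :: "nat list \<Rightarrow> nat list \<Rightarrow> bool" where
  "theta_cond \<alpha> \<beta> \<longleftrightarrow> list_all2 (\<le>) (butlast \<alpha>) \<beta> \<and> sum_list (map2 (-) \<beta> (butlast \<alpha>)) \<le> last \<alpha>"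

definition theta_term :: "nat list \<Rightarrow> nat list \<Rightarrow> 'c \<Rightarrow> 'c" where
  "theta_term \<alpha> \<beta> c = (let l = map2 (-) \<beta> (butlast \<alpha>); r = sum_list l; k = last \<alpha> in
          sc (of_nat (k choose r) * (-1) ^ r * fact r / prod_list (map fact l)) ((Dop ^^ (k - r)) c))"

lemma theta_term_0 [simp]: "theta_term \<alpha> \<beta> 0 = 0"
  by (simp add: theta_term_def Let_def)

lemma theta_eq_sum_theta_term: "theta sc Dop n A \<beta> = (if length \<beta> = n - 1 then
   (\<Sum>\<alpha>\<in>{\<alpha>. length \<alpha> = n \<and> A \<alpha> \<noteq> 0 \<and> theta_cond \<alpha> \<beta>}. theta_term \<alpha> \<beta> (A \<alpha>)) else 0)"
  unfolding theta_def theta_cond_def theta_term_def by simp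

lemma theta_Dmon: "theta sc Dop n (Dmon \<alpha> c) \<beta> =
   (if length \<beta> = n - 1 \<and> length \<alpha> = n \<and> theta_cond \<alpha> \<beta> then theta_term \<alpha> \<beta> c else 0)"
proof (cases "length \<beta> = n - 1")
  case False
  then show ?thesis by (simp add: theta_eq_sum_theta_term)
next
  case lb: True
  show ?thesis
  proof (cases "length \<alpha> = n \<and> theta_cond \<alpha> \<beta> \<and> c \<noteq> 0")
    case True
    then have "{\<alpha>'. length \<alpha>' = n \<and> Dmon \<alpha> c \<alpha>' \<noteq> 0 \<and> theta_cond \<alpha>' \<beta>} = {\<alpha>}" by (auto simp: Dmon_def)
    then show ?thesis using True lb by (simp add: theta_eq_sum_theta_term Dmon_def)
  next
    case False
    then have "{\<alpha>'. length \<alpha>' = n \<and> Dmon \<alpha> c \<alpha>' \<noteq> 0 \<and> theta_cond \<alpha>' \<beta>} = {}" by (auto simp: Dmon_def)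
    then show ?thesis using False lb by (auto simp: theta_eq_sum_theta_term Dmon_def)
  qed
qed

lemma theta_decomp:
  assumes "finite {\<alpha>. A \<alpha> \<noteq> 0}"
  shows "theta sc Dop n A \<beta> = (\<Sum>\<alpha>\<in>{\<alpha>. A \<alpha> \<noteq> 0}. theta sc Dop n (Dmon \<alpha> (A \<alpha>)) \<beta>)"
proof -
  have "(\<Sum>\<alpha>\<in>{\<alpha>. length \<alpha> = n \<and> A \<alpha> \<noteq> 0 \<and> theta_cond \<alpha> \<beta>}. theta_term \<alpha> \<beta> (A \<alpha>)) =
      (\<Sum>\<alpha>\<in>{\<alpha>. A \<alpha> \<noteq> 0}. if length \<alpha> = n \<and> theta_cond \<alpha> \<beta> then theta_term \<alpha> \<beta> (A \<alpha>) else 0)"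
    using assms by (subst sum.inter_filter[symmetric]) (auto intro: sum.cong)
  then show ?thesis by (simp add: theta_eq_sum_theta_term[of n A] theta_Dmon)
qed

lemma theta_cond_set_le:
  assumes "theta_cond \<alpha> \<beta>"
  shows "set \<beta> \<subseteq> {..sum_list \<alpha>}"
proof
  fix x assume "x \<in> set \<beta>"
  then obtain i where i: "i < length \<beta>" "\<beta> ! i = x"
    by (auto simp: in_set_conv_nth)
  let ?a = "butlast \<alpha>"
  have len: "length ?a = length \<beta>"
    using assms by (auto simp: theta_cond_def dest: list_all2_lengthD)
  then have "\<alpha> \<noteq> []"
    using i by auto
  have "x = ?a ! i + map2 (-) \<beta> ?a ! i"
    using assms i len by (auto simp: theta_cond_def list_all2_conv_all_nth)
  also have "\<dots> \<le> sum_list ?a + sum_list (map2 (-) \<beta> ?a)"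
    using i len by (intro add_mono elem_le_sum_list) simp_all
  also have "\<dots> \<le> sum_list ?a + last \<alpha>"
    using assms by (simp add: theta_cond_def)
  also have "\<dots> = sum_list \<alpha>"
    using append_butlast_last_id[OF \<open>\<alpha> \<noteq> []\<close>] by (metis sum_list_append sum_list.Cons sum_list.Nil add_0_right)
  finally show "x \<in> {..sum_list \<alpha>}"
    by simp
qed

lemma finite_theta_supp:
  assumes "fin_tens n A"
  shows "finite {\<beta>. theta sc Dop n A \<beta> \<noteq> 0}"
proof (rule finite_subset)
  have fin: "finite {\<alpha>. A \<alpha> \<noteq> 0}"
    using assms by (simp add: fin_tens_def)
  then show "finite (\<Union>\<alpha>\<in>{\<alpha>. A \<alpha> \<noteq> 0}. {\<beta>. set \<beta> \<subseteq> {..sum_list \<alpha>} \<and> length \<beta> = n - 1})"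
    by (auto intro: finite_lists_length_eq)
  show "{\<beta>. theta sc Dop n A \<beta> \<noteq> 0} \<subseteq> (\<Union>\<alpha>\<in>{\<alpha>. A \<alpha> \<noteq> 0}. {\<beta>. set \<beta> \<subseteq> {..sum_list \<alpha>} \<and> length \<beta> = n - 1})"
  proof
    fix \<beta> assume "\<beta> \<in> {\<beta>. theta sc Dop n A \<beta> \<noteq> 0}"
    then obtain \<alpha> where "A \<alpha> \<noteq> 0" "theta sc Dop n (Dmon \<alpha> (A \<alpha>)) \<beta> \<noteq> 0"
      unfolding theta_decomp[OF fin] by (auto elim: sum.not_neutral_contains_not_neutral)
    then show "\<beta> \<in> (\<Union>\<alpha>\<in>{\<alpha>. A \<alpha> \<noteq> 0}. {\<beta>. set \<beta> \<subseteq> {..sum_list \<alpha>} \<and> length \<beta> = n - 1})"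
      using theta_cond_set_le by (auto simp: theta_Dmon split: if_splits)
  qed
qed

lemma Pmap_eq_sum_degrees:
  assumes fin: "finite {\<beta>. theta sc Dop n A \<beta> \<noteq> 0}"
  shows "Pmap sc Dop n xs A = (\<Sum>ks\<in>PiE {..<n - 1} (\<lambda>l. {..degree (xs l)}).
     sc (\<Prod>i<n - 1. pairing (antipode_t (xs i)) (ks i)) (theta sc Dop n A (map ks [0..<n - 1])))"
proof -
  define m where "m = n - 1"
  define f where "f \<beta> = sc (\<Prod>i<m. pairing (antipode_t (xs i)) (\<beta> ! i)) (theta sc Dop n A \<beta>)" for \<beta>
  define T where "T = {\<beta>. length \<beta> = m \<and> theta sc Dop n A \<beta> \<noteq> 0}"
  define BS where "BS = {j. length j = m \<and> (\<forall>i<m. j ! i \<le> degree (xs i))}"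
  have fT: "finite T" unfolding T_def by (rule finite_subset[OF _ fin]) auto
  have "BS = {j. length j = m \<and> list_all2 (\<le>) j (map (\<lambda>i. degree (xs i)) [0..<m])}"
    by (auto simp: BS_def list_all2_conv_all_nth)
  then have fBS: "finite BS"
    by (simp add: finite_below)
  have "Pmap sc Dop n xs A = (\<Sum>\<beta>\<in>T. f \<beta>)" by (simp add: Pmap_def T_def f_def m_def)
  also have "\<dots> = (\<Sum>\<beta>\<in>T \<union> BS. f \<beta>)"
    by (rule sum.mono_neutral_left) (use fT fBS in \<open>auto simp: T_def BS_def f_def\<close>)
  also have "\<dots> = (\<Sum>\<beta>\<in>BS. f \<beta>)"
  proof (rule sum.mono_neutral_right)
    show "\<forall>\<beta>\<in>T \<union> BS - BS. f \<beta> = 0"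
    proof
      fix \<beta> assume "\<beta> \<in> T \<union> BS - BS"
      then have "length \<beta> = m" "\<not> (\<forall>i<m. \<beta> ! i \<le> degree (xs i))" by (auto simp: T_def BS_def)
      then obtain i where i: "i < m" "degree (xs i) < \<beta> ! i" by (auto simp: not_le)
      then have "pairing (antipode_t (xs i)) (\<beta> ! i) = 0" by (simp add: pairing_antipode coeff_eq_0)
      then have "(\<Prod>i<m. pairing (antipode_t (xs i)) (\<beta> ! i)) = 0" using i(1) by (intro prod_zero) auto
      then show "f \<beta> = 0" by (simp add: f_def)
    qed
  qed (use fT fBS in auto)
  also have "\<dots> = (\<Sum>ks\<in>PiE {..<m} (\<lambda>l. {..degree (xs l)}). f (map ks [0..<m]))"
    unfolding BS_def by (rule sum_PiE_eq_sum_lists[symmetric])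
  also have "\<dots> = (\<Sum>ks\<in>PiE {..<n - 1} (\<lambda>l. {..degree (xs l)}).
     sc (\<Prod>i<n - 1. pairing (antipode_t (xs i)) (ks i)) (theta sc Dop n A (map ks [0..<n - 1])))"
    unfolding m_def f_def by (intro sum.cong refl arg_cong2[where f=sc] prod.cong) auto
  finally show ?thesis .
qed

end

text \<open>The evaluation points of the \<open>ks\<close>-th monomial of \<open>x\<^sub>1 \<otimes> \<dots> \<otimes> x\<^sub>m\<close>: the Sweedler
  component \<open>t\<^sup>k\<^sup>-\<^sup>j \<otimes> t\<^sup>j\<close> of \<open>\<Delta>(t\<^sup>k)\<close> contributes \<open>t\<^sup>k\<^sup>-\<^sup>j\<close> to its own factor and \<open>t\<^sup>j\<close>
  to the last factor \<open>y S(t\<^sup>j\<^sup>1 \<cdots> t\<^sup>j\<^sup>m)\<close>, of which \<open>t\<^sup>p\<close> is one monomial.\<close>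
definition eval_points :: "nat \<Rightarrow> (nat \<Rightarrow> nat) \<Rightarrow> (nat \<Rightarrow> nat) \<Rightarrow> int \<Rightarrow> int list" where
  "eval_points m ks js p = map (\<lambda>i. int (ks i - js i)) [0..<m] @ [p + int (\<Sum>l<m. js l)]"

lemma length_eval_points [simp]: "length (eval_points m ks js p) = Suc m"
  by (simp add: eval_points_def)

lemma Dcoeffs_map_int:
  "Dcoeffs (map int ds) as = (prod_list (map2 (\<lambda>d a. Dcoeff (of_nat d) a) ds as) :: 'k::field_char_0)"
proof (induct ds arbitrary: as)
  case (Cons d ds)
  then show ?case by (cases as) auto
qed simp

context conf_alg
begin

lemma sum_eval_points_Dmon:
  fixes ks :: "nat \<Rightarrow> nat"
  assumes "length \<alpha>' = m"
  defines "K \<equiv> map ks [0..<m]"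
  shows "(\<Sum>js\<in>PiE {..<m} (\<lambda>l. {..ks l}). vsc (\<Prod>l<m. coeff (xs l) (ks l) * of_nat (ks l choose js l))
        (vsc ((-1) ^ (\<Sum>l<m. js l) * y) (eval_tens (eval_points m ks js p) (Dmon (\<alpha>' @ [k]) c))))
     = lmon (p + int (sum_list K) - int (sum_list (\<alpha>' @ [k]))) (sc (y * (\<Prod>l<m. coeff (xs l) (ks l)) *
         (\<Sum>j\<in>below K. prod_list (map2 (\<lambda>Ki ji. of_nat (Ki choose ji) * (-1) ^ ji) K j) *
            prod_list (map2 (\<lambda>d a. Dcoeff (of_nat d) a) (map2 (-) K j) \<alpha>') *
            Dcoeff (of_int p + of_nat (sum_list j)) k)) c)"
    (is "_ = lmon ?E (sc (y * ?CO * (\<Sum>j\<in>below K. ?g j)) c)")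
proof -
  have "vsc (\<Prod>l<m. coeff (xs l) (ks l) * of_nat (ks l choose js l))
        (vsc ((-1) ^ (\<Sum>l<m. js l) * y) (eval_tens (eval_points m ks js p) (Dmon (\<alpha>' @ [k]) c)))
      = lmon ?E (sc (y * ?CO * ?g (map js [0..<m])) c)"
    if js: "js \<in> PiE {..<m} (\<lambda>l. {..ks l})" for js
  proof -
    define J where "J = (\<Sum>l<m. js l)"
    have jle: "js l \<le> ks l" if "l < m" for l
      using js that by auto
    have "sum_list (eval_points m ks js p) = (\<Sum>l<m. int (ks l - js l)) + (p + int J)"
      by (simp add: eval_points_def sum_list_map_upt J_def)
    also have "(\<Sum>l<m. int (ks l - js l)) = (\<Sum>l<m. int (ks l)) - int J"
      using jle by (simp add: of_nat_diff sum_subtractf J_def)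
    finally have "sum_list (eval_points m ks js p) = p + int (sum_list K)"
      by (simp add: K_def sum_list_map_upt)
    then have "eval_tens (eval_points m ks js p) (Dmon (\<alpha>' @ [k]) c)
        = lmon ?E (sc (Dcoeffs (eval_points m ks js p) (\<alpha>' @ [k])) c)"
      using assms(1) by (simp add: eval_tens_Dmon)
    moreover have "Dcoeffs (eval_points m ks js p) (\<alpha>' @ [k]) = (prod_list (map2 (\<lambda>d a. Dcoeff (of_nat d) a) (map2 (-) K (map js [0..<m])) \<alpha>') * Dcoeff (of_int p + of_nat J) k :: 'k)"
    proof -
      have "eval_points m ks js p = map int (map2 (-) K (map js [0..<m])) @ [p + int J]"
        by (simp add: eval_points_def K_def J_def list_eq_iff_nth_eq nth_append)
      then show ?thesis
        using assms(1) by (simp add: Dcoeffs_append Dcoeffs_map_int K_def del: map_map)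
    qed
    moreover have "prod_list (map2 (\<lambda>Ki ji. of_nat (Ki choose ji) * (-1) ^ ji) K (map js [0..<m]))
        = (\<Prod>l<m. of_nat (ks l choose js l)) * (-1::'k) ^ J"
      by (simp add: K_def prod_list_map2_upt prod.distrib J_def power_sum)
    moreover have "sum_list (map js [0..<m]) = J"
      by (simp add: J_def sum_list_map_upt)
    ultimately show ?thesis
      by (simp add: lmon_scale[symmetric] prod.distrib J_def[symmetric] mult_ac)
  qed
  then have "(\<Sum>js\<in>PiE {..<m} (\<lambda>l. {..ks l}). vsc (\<Prod>l<m. coeff (xs l) (ks l) * of_nat (ks l choose js l))
        (vsc ((-1) ^ (\<Sum>l<m. js l) * y) (eval_tens (eval_points m ks js p) (Dmon (\<alpha>' @ [k]) c))))
      = lmon ?E (sc (y * ?CO * (\<Sum>js\<in>PiE {..<m} (\<lambda>l. {..ks l}). ?g (map js [0..<m]))) c)"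
    by (simp add: lmon_sum[symmetric] V.scale_sum_left[symmetric] sum_distrib_left)
  also have "(\<Sum>js\<in>PiE {..<m} (\<lambda>l. {..ks l}). ?g (map js [0..<m])) = (\<Sum>j\<in>below K. ?g j)"
    unfolding K_def below_map by (rule sum_PiE_eq_sum_lists)
  finally show ?thesis .
qed

lemma sum_eval_points_Dmon_closed:
  fixes ks :: "nat \<Rightarrow> nat"
  assumes "length \<alpha>' = m"
  defines "K \<equiv> map ks [0..<m]"
  defines "r \<equiv> sum_list (map2 (-) K \<alpha>')"
  shows "(\<Sum>js\<in>PiE {..<m} (\<lambda>l. {..ks l}). vsc (\<Prod>l<m. coeff (xs l) (ks l) * of_nat (ks l choose js l))
        (vsc ((-1) ^ (\<Sum>l<m. js l) * y) (eval_tens (eval_points m ks js p) (Dmon (\<alpha>' @ [k]) c))))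
      = (if list_all2 (\<le>) \<alpha>' K \<and> r \<le> k
         then lmon (p - int (k - r)) (sc (y * (\<Prod>l<m. coeff (xs l) (ks l)) *
           (fact_ratios K \<alpha>' * (fact k / fact (k - r)) * Dcoeff (of_int p) (k - r))) c)
         else 0)"
proof -
  have G: "(\<Sum>j\<in>below K. prod_list (map2 (\<lambda>Ki ji. of_nat (Ki choose ji) * (-1) ^ ji) K j) *
        prod_list (map2 (\<lambda>d a. Dcoeff (of_nat d) a) (map2 (-) K j) \<alpha>') * Dcoeff (of_int p + of_nat (sum_list j)) k)
      = (if list_all2 (\<le>) \<alpha>' K \<and> r \<le> k
         then fact_ratios K \<alpha>' * (fact k / fact (k - r)) * Dcoeff (of_int p) (k - r) else 0)"
    unfolding r_def by (rule sum_below_binomial_Dcoeffs) (simp add: K_def assms(1))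
  show ?thesis
  proof (cases "list_all2 (\<le>) \<alpha>' K \<and> r \<le> k")
    case True
    then have "sum_list K = sum_list \<alpha>' + r"
      using sum_list_map2_minus_le by (simp add: r_def)
    then have "p + int (sum_list K) - int (sum_list (\<alpha>' @ [k])) = p - int (k - r)"
      using True by (simp add: of_nat_diff)
    then show ?thesis
      unfolding sum_eval_points_Dmon[OF assms(1)] K_def[symmetric] G using True by (simp only: if_True simp_thms)
  next
    case False
    then show ?thesis
      unfolding sum_eval_points_Dmon[OF assms(1)] K_def[symmetric] G
      by (simp only: if_False mult_zero_right V.scale_zero_left lmon_0)
  qed
qed

lemma prod_pairing_antipode:
  "(\<Prod>i<m. pairing (antipode_t (xs i)) (ks i))
    = prod_list (map (\<lambda>Ki. fact Ki * (-1) ^ Ki) (map ks [0..<m])) * (\<Prod>l<m. coeff (xs l) (ks l))"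
  by (simp add: pairing_antipode prod_list_map_upt prod.distrib mult_ac)

lemma lmon_pairing_theta_Dmon_ceq:
  assumes "length \<alpha> = Suc m"
  shows "lmon p (sc y (sc (\<Prod>i<m. pairing (antipode_t (xs i)) (ks i))
      (theta sc Dop (Suc m) (Dmon \<alpha> c) (map ks [0..<m]))))
    \<approx> (\<Sum>js\<in>PiE {..<m} (\<lambda>l. {..ks l}). vsc (\<Prod>l<m. coeff (xs l) (ks l) * of_nat (ks l choose js l))
        (vsc ((-1) ^ (\<Sum>l<m. js l) * y) (eval_tens (eval_points m ks js p) (Dmon \<alpha> c))))"
proof -
  obtain \<alpha>' k where \<alpha>: "\<alpha> = \<alpha>' @ [k]" "length \<alpha>' = m"
    using assms by (cases \<alpha> rule: rev_cases) auto
  define K where "K = map ks [0..<m]"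
  define r where "r = sum_list (map2 (-) K \<alpha>')"
  define a where "a = y * (\<Prod>l<m. coeff (xs l) (ks l)) * (fact_ratios K \<alpha>' * (fact k / fact (k - r)))"
  have theta_eq: "theta sc Dop (Suc m) (Dmon \<alpha> c) K = (if list_all2 (\<le>) \<alpha>' K \<and> r \<le> k
      then sc (of_nat (k choose r) * (-1) ^ r * fact r / prod_list (map fact (map2 (-) K \<alpha>'))) ((Dop ^^ (k - r)) c)
      else 0)"
    using \<alpha> by (simp add: theta_Dmon theta_cond_def theta_term_def Let_def K_def r_def)
  have RHS: "(\<Sum>js\<in>PiE {..<m} (\<lambda>l. {..ks l}). vsc (\<Prod>l<m. coeff (xs l) (ks l) * of_nat (ks l choose js l))
        (vsc ((-1) ^ (\<Sum>l<m. js l) * y) (eval_tens (eval_points m ks js p) (Dmon \<alpha> c))))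
      = (if list_all2 (\<le>) \<alpha>' K \<and> r \<le> k then lmon (p - int (k - r)) (sc (Dcoeff (of_int p) (k - r) * a) c) else 0)"
    unfolding \<alpha>(1) sum_eval_points_Dmon_closed[OF \<alpha>(2)] K_def[symmetric] r_def[symmetric] a_def
    by (simp only: mult_ac)
  show ?thesis
  proof (cases "list_all2 (\<le>) \<alpha>' K \<and> r \<le> k")
    case True
    define PF where "PF = (prod_list (map (\<lambda>Ki. fact Ki * (-1) ^ Ki) K) :: 'k)"
    define th where "th = (of_nat (k choose r) * (-1) ^ r * fact r / prod_list (map fact (map2 (-) K \<alpha>')) :: 'k)"
    have "y * (PF * (\<Prod>l<m. coeff (xs l) (ks l)) * th) = y * (\<Prod>l<m. coeff (xs l) (ks l)) * (PF * th)"
      by (simp only: mult_ac)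
    also have "PF * th = fact_ratios K \<alpha>' * (fact k / fact (k - r))"
      unfolding PF_def th_def r_def using True by (subst mult.commute, intro fact_sign_theta_coeff) (auto simp: r_def)
    finally have "y * (PF * (\<Prod>l<m. coeff (xs l) (ks l)) * th) = a"
      unfolding a_def .
    then have "lmon p (sc y (sc (\<Prod>i<m. pairing (antipode_t (xs i)) (ks i))
        (theta sc Dop (Suc m) (Dmon \<alpha> c) (map ks [0..<m])))) = lmon p ((Dop ^^ (k - r)) (sc a c))"
      using True unfolding K_def[symmetric] theta_eq prod_pairing_antipode PF_def[symmetric] th_def[symmetric]
      by (simp add: Dpow_scale V.scale_scale)
    also have "\<dots> \<approx> lmon (p - int (k - r)) (sc (Dcoeff (of_int p) (k - r)) (sc a c))"
      by (rule lmon_Dpow_ceq)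
    finally show ?thesis
      unfolding RHS using True by (simp only: V.scale_scale if_True simp_thms)
  next
    case False
    then show ?thesis
      unfolding RHS K_def[symmetric] theta_eq
      by (simp only: if_False V.scale_zero_right lmon_0 ceq_refl)
  qed
qed

lemma coeff_elem_eq_sum:
  assumes "finite Y" "{p. y p \<noteq> 0} \<subseteq> Y"
  shows "coeff_elem sc b y = (\<Sum>p\<in>Y. lmon p (sc (y p) b))"
proof
  fix q
  have "(\<Sum>p\<in>Y. lmon p (sc (y p) b)) q = (if q \<in> Y then sc (y q) b else 0)"
    using assms(1) by (simp add: sum_fun_apply lmon_def sum.delta)
  then show "coeff_elem sc b y q = (\<Sum>p\<in>Y. lmon p (sc (y p) b)) q"
    using assms(2) by (auto simp: coeff_elem_def)
qed

lemma coeff_elem_lmono: "coeff_elem sc b (lmono e) = lmon e b"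
  by (auto simp: fun_eq_iff coeff_elem_def lmono_def lmon_def)

lemma coeff_elem_y_antipode:
  assumes "finite {p. y p \<noteq> 0}"
  shows "coeff_elem sc b (y_antipode y J) = (\<Sum>p | y p \<noteq> 0. vsc ((-1) ^ J * y p) (lmon (p + int J) b))"
proof
  fix q
  have "(\<Sum>p | y p \<noteq> 0. vsc ((-1) ^ J * y p) (lmon (p + int J) b)) q
      = (\<Sum>p | y p \<noteq> 0. if q - int J = p then sc ((-1) ^ J * y p) b else 0)"
    unfolding sum_fun_apply by (rule sum.cong) (auto simp: lmon_def)
  also have "\<dots> = sc ((-1) ^ J * y (q - int J)) b"
    using assms by (simp add: sum.delta')
  finally show "coeff_elem sc b (y_antipode y J) q
      = (\<Sum>p | y p \<noteq> 0. vsc ((-1) ^ J * y p) (lmon (p + int J) b)) q"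
    by (simp add: coeff_elem_def y_antipode_def)
qed

lemma Pymap_ceq_eval_tens:
  assumes A: "fin_tens (Suc m) A" and y: "finite {p. y p \<noteq> 0}"
  shows "Pymap sc Dop (Suc m) xs y A \<approx>
   (\<Sum>ks\<in>PiE {..<m} (\<lambda>l. {..degree (xs l)}). \<Sum>js\<in>PiE {..<m} (\<lambda>l. {..ks l}).
      vsc (\<Prod>l<m. coeff (xs l) (ks l) * of_nat (ks l choose js l))
        (\<Sum>p | y p \<noteq> 0. vsc ((-1) ^ (\<Sum>l<m. js l) * y p) (eval_tens (eval_points m ks js p) A)))"
proof -
  let ?Y = "{p. y p \<noteq> 0}" and ?SA = "{\<alpha>. A \<alpha> \<noteq> 0}"
  let ?KS = "PiE {..<m} (\<lambda>l. {..degree (xs l)})" and ?JS = "\<lambda>ks. PiE {..<m} (\<lambda>l. {..ks l})"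
  let ?CC = "\<lambda>ks js. \<Prod>l<m. coeff (xs l) (ks l) * of_nat (ks l choose js l)"
  let ?sg = "\<lambda>js p. (-1) ^ (\<Sum>l<m. js l) * y p"
  let ?W = "\<lambda>ks. \<Prod>i<m. pairing (antipode_t (xs i)) (ks i)"
  have fin: "finite ?SA" and len: "\<And>\<alpha>. \<alpha> \<in> ?SA \<Longrightarrow> length \<alpha> = Suc m"
    using A by (auto simp: fin_tens_def)
  have "Pmap sc Dop (Suc m) xs A
      = (\<Sum>ks\<in>?KS. \<Sum>\<alpha>\<in>?SA. sc (?W ks) (theta sc Dop (Suc m) (Dmon \<alpha> (A \<alpha>)) (map ks [0..<m])))"
    using Pmap_eq_sum_degrees[OF finite_theta_supp[OF A], of xs]
    by (simp add: theta_decomp[OF fin] V.scale_sum_right)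
  then have "Pymap sc Dop (Suc m) xs y A = (\<Sum>p\<in>?Y. \<Sum>ks\<in>?KS. \<Sum>\<alpha>\<in>?SA.
      lmon p (sc (y p) (sc (?W ks) (theta sc Dop (Suc m) (Dmon \<alpha> (A \<alpha>)) (map ks [0..<m])))))"
    unfolding Pymap_def using y by (simp add: coeff_elem_eq_sum V.scale_sum_right lmon_sum)
  also have "\<dots> \<approx> (\<Sum>p\<in>?Y. \<Sum>ks\<in>?KS. \<Sum>\<alpha>\<in>?SA. \<Sum>js\<in>?JS ks.
      vsc (?CC ks js) (vsc (?sg js p) (eval_tens (eval_points m ks js p) (Dmon \<alpha> (A \<alpha>)))))"
    using len by (intro ceq_sum) (rule lmon_pairing_theta_Dmon_ceq)
  also have "\<dots> = (\<Sum>ks\<in>?KS. \<Sum>js\<in>?JS ks. vsc (?CC ks js)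
      (\<Sum>p\<in>?Y. vsc (?sg js p) (\<Sum>\<alpha>\<in>?SA. eval_tens (eval_points m ks js p) (Dmon \<alpha> (A \<alpha>)))))"
  proof -
    let ?f = "\<lambda>p ks \<alpha> js. vsc (?CC ks js) (vsc (?sg js p) (eval_tens (eval_points m ks js p) (Dmon \<alpha> (A \<alpha>))))"
    have "(\<Sum>p\<in>?Y. \<Sum>ks\<in>?KS. \<Sum>\<alpha>\<in>?SA. \<Sum>js\<in>?JS ks. ?f p ks \<alpha> js)
        = (\<Sum>ks\<in>?KS. \<Sum>p\<in>?Y. \<Sum>\<alpha>\<in>?SA. \<Sum>js\<in>?JS ks. ?f p ks \<alpha> js)"
      by (rule sum.swap)
    also have "\<dots> = (\<Sum>ks\<in>?KS. \<Sum>p\<in>?Y. \<Sum>js\<in>?JS ks. \<Sum>\<alpha>\<in>?SA. ?f p ks \<alpha> js)"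
      by (intro sum.cong refl sum.swap)
    also have "\<dots> = (\<Sum>ks\<in>?KS. \<Sum>js\<in>?JS ks. \<Sum>p\<in>?Y. \<Sum>\<alpha>\<in>?SA. ?f p ks \<alpha> js)"
      by (intro sum.cong refl sum.swap)
    finally show ?thesis
      by (simp only: vsc_sum)
  qed
  also have "\<dots> = (\<Sum>ks\<in>?KS. \<Sum>js\<in>?JS ks. vsc (?CC ks js)
      (\<Sum>p\<in>?Y. vsc (?sg js p) (eval_tens (eval_points m ks js p) A)))"
    using A by (simp add: eval_tens_decomp)
  finally show ?thesis .
qed

text \<open>Only the slot \<open>inv \<sigma> m\<close>, holding \<open>y S(\<dots>)\<close>, is not a monomial; it is expanded by
  linearity of \<open>tmon\<close> in one slot.\<close>
lemma tmon_coeff_elem_eval_points: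
  assumes tr: "leaves tr = Suc m" and \<sigma>: "\<sigma> permutes {..<Suc m}" and y: "finite {p. y p \<noteq> 0}"
  shows "tmon sc pr tr (map (\<lambda>i. coeff_elem sc (a (\<sigma> i))
           (if \<sigma> i \<noteq> m then lmono (int (ks (\<sigma> i) - js (\<sigma> i))) else y_antipode y (\<Sum>l<m. js l))) [0..<Suc m])
    = (\<Sum>p | y p \<noteq> 0. vsc ((-1) ^ (\<Sum>l<m. js l) * y p)
        (tmon sc pr tr (map2 lmon (permute_list \<sigma> (eval_points m ks js p)) (map (\<lambda>i. a (\<sigma> i)) [0..<Suc m]))))"
proof -
  define J where "J = (\<Sum>l<m. js l)"
  define i0 where "i0 = inv \<sigma> m"
  define us where "us = map (\<lambda>i. lmon (int (ks (\<sigma> i) - js (\<sigma> i))) (a (\<sigma> i))) [0..<Suc m]"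
  note i0 = permutes_inv_last[OF \<sigma>, folded i0_def]
  note \<sigma>_ne = permutes_other_less_last[OF \<sigma>, folded i0_def]
  have "map (\<lambda>i. coeff_elem sc (a (\<sigma> i))
           (if \<sigma> i \<noteq> m then lmono (int (ks (\<sigma> i) - js (\<sigma> i))) else y_antipode y J)) [0..<Suc m]
      = us[i0 := (\<Sum>p | y p \<noteq> 0. vsc ((-1) ^ J * y p) (lmon (p + int J) (a m)))]"
  proof (rule nth_equalityI)
    fix i assume "i < length (map (\<lambda>i. coeff_elem sc (a (\<sigma> i))
           (if \<sigma> i \<noteq> m then lmono (int (ks (\<sigma> i) - js (\<sigma> i))) else y_antipode y J)) [0..<Suc m])"
    then have i: "i < Suc m" by simp
    show "map (\<lambda>i. coeff_elem sc (a (\<sigma> i))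
           (if \<sigma> i \<noteq> m then lmono (int (ks (\<sigma> i) - js (\<sigma> i))) else y_antipode y J)) [0..<Suc m] ! i
      = us[i0 := (\<Sum>p | y p \<noteq> 0. vsc ((-1) ^ J * y p) (lmon (p + int J) (a m)))] ! i"
    proof (cases "i = i0")
      case True
      then show ?thesis using i0 y by (simp add: us_def coeff_elem_y_antipode del: upt_Suc)
    next
      case False
      then show ?thesis using i \<sigma>_ne[OF i False] by (simp add: us_def coeff_elem_lmono del: upt_Suc)
    qed
  qed (simp add: us_def)
  moreover have "us[i0 := lmon (p + int J) (a m)]
      = map2 lmon (permute_list \<sigma> (eval_points m ks js p)) (map (\<lambda>i. a (\<sigma> i)) [0..<Suc m])" for p
  proof (rule nth_equalityI)
    fix i assume "i < length (us[i0 := lmon (p + int J) (a m)])"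
    then have i: "i < Suc m" by (simp add: us_def)
    have "permute_list \<sigma> (eval_points m ks js p) ! i = eval_points m ks js p ! \<sigma> i"
      using i \<sigma> by (simp add: permute_list_nth)
    then show "us[i0 := lmon (p + int J) (a m)] ! i
      = map2 lmon (permute_list \<sigma> (eval_points m ks js p)) (map (\<lambda>i. a (\<sigma> i)) [0..<Suc m]) ! i"
      using i i0 \<sigma>_ne[OF i] by (cases "i = i0") (simp_all add: us_def eval_points_def nth_append J_def del: upt_Suc)
  qed (simp add: us_def)
  moreover have "tmon sc pr tr (us[i0 := (\<Sum>p | y p \<noteq> 0. vsc ((-1) ^ J * y p) (lmon (p + int J) (a m)))])
      = (\<Sum>p | y p \<noteq> 0. vsc ((-1) ^ J * y p) (tmon sc pr tr (us[i0 := lmon (p + int J) (a m)])))"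
    using tr i0 by (intro tmon_lincomb_slot) (auto simp: us_def)
  ultimately show ?thesis
    unfolding J_def[symmetric] by (simp only:)
qed

lemma sum_tmon_eval_points_eq:
  assumes "leaves tr = Suc m" "\<sigma> permutes {..<Suc m}" "finite {p. y p \<noteq> 0}"
  shows "(\<Sum>ks\<in>PiE {..<m} (\<lambda>l. {..degree (xs l)}). \<Sum>js\<in>PiE {..<m} (\<lambda>l. {..ks l}).
      vsc (\<Prod>l<m. coeff (xs l) (ks l) * of_nat (ks l choose js l))
        (\<Sum>p | y p \<noteq> 0. vsc ((-1) ^ (\<Sum>l<m. js l) * y p)
           (tmon sc pr tr (map2 lmon (permute_list \<sigma> (eval_points m ks js p)) (map (\<lambda>i. a (\<sigma> i)) [0..<Suc m])))))
    = (\<lambda>p. \<Sum>ks\<in>PiE {..<m} (\<lambda>l. {..degree (xs l)}). \<Sum>js\<in>PiE {..<m} (\<lambda>l. {..ks l}).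
      sc (\<Prod>l<m. coeff (xs l) (ks l) * of_nat (ks l choose js l))
        (tmon sc pr tr (map (\<lambda>i. coeff_elem sc (a (\<sigma> i))
           (if \<sigma> i \<noteq> m then lmono (int (ks (\<sigma> i) - js (\<sigma> i))) else y_antipode y (\<Sum>l<m. js l)))
             [0..<Suc m]) p))"
  using assms by (simp add: tmon_coeff_elem_eval_points fun_eq_iff sum_fun_apply del: upt_Suc)
end

theorem lemma3p2:
  fixes sc :: "'k::field_char_0 \<Rightarrow> 'c::ab_group_add \<Rightarrow> 'c"
    and Dop :: "'c \<Rightarrow> 'c" and pr :: "nat \<Rightarrow> 'c \<Rightarrow> 'c \<Rightarrow> 'c"
    and tr :: bracketing and n :: nat and \<sigma> :: "nat \<Rightarrow> nat"
    and xs :: "nat \<Rightarrow> 'k poly" and y :: "int \<Rightarrow> 'k" and a :: "nat \<Rightarrow> 'c"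
  assumes "conformal_algebra sc Dop pr"
    and "leaves tr = n"
    and "\<sigma> permutes {..<n}"
    and "finite {p. y p \<noteq> 0}"
  shows "coeff_eq sc Dop
     (Pymap sc Dop n xs y (perm_tens \<sigma> (tstar sc pr tr (map (\<lambda>i. a (\<sigma> i)) [0..<n]))))
     (\<lambda>p. \<Sum>ks\<in>PiE {..<n - 1} (\<lambda>l. {..degree (xs l)}). \<Sum>js\<in>PiE {..<n - 1} (\<lambda>l. {..ks l}).
        sc (\<Prod>l<n - 1. coeff (xs l) (ks l) * of_nat (ks l choose js l))
           (tmon sc pr tr
              (map (\<lambda>i. coeff_elem sc (a (\<sigma> i))
                     (if \<sigma> i \<noteq> n - 1 then lmono (int (ks (\<sigma> i) - js (\<sigma> i)))
                      else y_antipode y (\<Sum>l<n - 1. js l)))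
                 [0..<n]) p))"
proof -
  interpret conf_alg sc Dop pr
    by (rule conf_alg.intro) fact
  obtain m where n: "n = Suc m"
    using leaves_pos[of tr] assms(2) gr0_implies_Suc by metis
  define bs where "bs = map (\<lambda>i. a (\<sigma> i)) [0..<n]"
  have "fin_tens n (perm_tens \<sigma> (tstar sc pr tr bs))"
    using assms(2,3) fin_tens_tstar[of bs tr] by (intro fin_tens_perm_tens) (auto simp: bs_def)
  moreover have "eval_tens (eval_points m ks js p) (perm_tens \<sigma> (tstar sc pr tr bs))
      \<approx> tmon sc pr tr (map2 lmon (permute_list \<sigma> (eval_points m ks js p)) bs)" for ks js p
    using assms(2,3) n by (auto simp: eval_tens_perm_tens bs_def intro: eval_tens_tstar)
  ultimately have "Pymap sc Dop n xs y (perm_tens \<sigma> (tstar sc pr tr bs))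
    \<approx> (\<Sum>ks\<in>PiE {..<m} (\<lambda>l. {..degree (xs l)}). \<Sum>js\<in>PiE {..<m} (\<lambda>l. {..ks l}).
      vsc (\<Prod>l<m. coeff (xs l) (ks l) * of_nat (ks l choose js l))
        (\<Sum>p | y p \<noteq> 0. vsc ((-1) ^ (\<Sum>l<m. js l) * y p)
           (tmon sc pr tr (map2 lmon (permute_list \<sigma> (eval_points m ks js p)) bs))))"
    unfolding n by (intro ceq_trans[OF Pymap_ceq_eval_tens[OF _ assms(4)]] ceq_sum ceq_vsc)
  then show ?thesis
    using assms(2,3,4) unfolding ceq_def bs_def n diff_Suc_1 by (simp only: sum_tmon_eval_points_eq)
qed

end
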